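(* Assume the standing time-series setup described in the context. Let $(c_n)$ be a sequence of natural numbers with $|G_n|\le c_n$ for all $n$, where $G_n:=G\cap\{1,\dots,n\}$, let $\mathcal{U}_n:=\{S\subseteq\{1,\dots,n\}:|S|=n-c_n\}$, and assume conditions (A1) and (A2) hold. Then: (i) $|\mathcal{U}_n|\le(en/c_n)^{c_n}$; (ii) for every $n\in\mathbb{N}$, the $n$ components of $\eta^n_\phi:=(T^{\phi,n}_k(\eta))_{k\le n}$ are i.i.d. centred Gaussian random variables with variance $\sigma_\eta^2/n$; (iii) for all $\delta>0$ there exist $c'>0$ and $\bar n\in\mathbb{N}$ such that for all $n\ge\bar n$, \[ \mathbb{P}\Big[\min_{S\in\mathcal{U}_n}\sqrt{\lambda_{\min}\big((X^n_\phi)_{S\setminus G_n}^\top(X^n_\phi)_{S\setminus G_n}\big)}\ge c'\Big]\ge1-\delta. \]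
   Context: Standing setup: $T>0$; $\phi=\{\phi_k\}_{k\in\mathbb{N}}$ is an orthonormal basis of $L^2([0,T])$ with each $\phi_k$ right-continuous (or each left-continuous); $G\subseteq\mathbb{N}$; $U=(U_t)_{t\in[0,T]}$ is a real measurable process with $\mathbb{E}[\int_0^TU_t^2dt]<\infty$, $\langle U,\phi_k\rangle_{L^2}=0$ a.s. for $k\notin G$, and a.s. for all $t$, $U_t=\sum_{k\in G}\langle\phi_k,U\rangle_{L^2}\phi_k(t)$; $X$ is an $\mathbb{R}^d$-valued process; $\eta=(\eta_t)_{t\in[0,T]}$ consists of i.i.d. centred Gaussians with variance $\sigma_\eta^2\ge0$, independent of $X$; $\beta\in\mathbb{R}^d$, $Y_t=X_t^\top\beta+U_t+\eta_t$; observations at times $Tl/n$, $l=1,\dots,n$. $T^{\phi,n}_k(V):=\frac1n\sum_{l=1}^nV_{Tl/n}\phi_k(Tl/n)$ (componentwise); $X^n_\phi\in\mathbb{R}^{n\times d}$ has $k$-th row $T^{\phi,n}_k(X)^\top$; $(X^n_\phi)_S$ denotes the rows indexed by $S$. (A1): for all $n$ and $l,k\le n$, $\frac1n\sum_{j=1}^n\phi_l(Tj/n)\phi_k(Tj/n)=\mathbb{1}\{l=k\}$. (A2): for every $\delta>0$ there exist $c'>0$, $\bar n$ such that for all $n\ge\bar n$ there is $S'_n\subseteq\{1,\dots,n\}$, $|S'_n|=2c_n+d$, such that for all $S''\subset S'_n$ with $|S''|=d$, with probability at least $1-\delta$, $\lambda_{\min}((X^n_\phi)_{S''}^\top(X^n_\phi)_{S''})\ge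 c'$. *)

theory Defs
  imports "HOL-Probability.Probability"
begin

(* Convention: \<nat> = {1,2,...}; the basis is indexed by k \<ge> 1 (value phi 0 is irrelevant). *)

definition ONB_L2 :: "real \<Rightarrow> (nat \<Rightarrow> real \<Rightarrow> real) \<Rightarrow> bool" where
  "ONB_L2 T \<phi> \<longleftrightarrow>
     (\<forall>k\<ge>1. \<phi> k \<in> borel_measurable lborel \<and> set_integrable lborel {0..T} (\<lambda>t. (\<phi> k t)\<^sup>2)) \<and>
     (\<forall>k\<ge>1. \<forall>l\<ge>1. (LINT t:{0..T}|lborel. \<phi> k t * \<phi> l t) = (if k = l then 1 else 0)) \<and>
     (\<forall>f::real \<Rightarrow> real. f \<in> borel_measurable lborel \<and> set_integrable lborel {0..T} (\<lambda>t. (f t)\<^sup>2) \<and>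
        (\<forall>k\<ge>1. (LINT t:{0..T}|lborel. f t * \<phi> k t) = 0)
        \<longrightarrow> (AE t in lborel. t \<in> {0..T} \<longrightarrow> f t = 0))"

definition one_sided_continuous :: "real \<Rightarrow> (nat \<Rightarrow> real \<Rightarrow> real) \<Rightarrow> bool" where
  "one_sided_continuous T \<phi> \<longleftrightarrow>
     (\<forall>k\<ge>1. \<forall>t\<in>{0..T}. continuous (at t within {t..T}) (\<phi> k)) \<or>
     (\<forall>k\<ge>1. \<forall>t\<in>{0..T}. continuous (at t within {0..t}) (\<phi> k))"

definition centred_gaussian :: "'a measure \<Rightarrow> real \<Rightarrow> ('a \<Rightarrow> real) \<Rightarrow> bool" where
  "centred_gaussian M v Z \<longleftrightarrow> Z \<in> borel_measurable M \<and>
     distr M borel Z = (if v = 0 then return borel 0 else density lborel (normal_density 0 (sqrt v)))"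

definition Tphi :: "real \<Rightarrow> (nat \<Rightarrow> real \<Rightarrow> real) \<Rightarrow> nat \<Rightarrow> nat \<Rightarrow> (real \<Rightarrow> 'b::real_vector) \<Rightarrow> 'b" where
  "Tphi T \<phi> n k V = (1 / real n) *\<^sub>R (\<Sum>l=1..n. \<phi> k (T * real l / real n) *\<^sub>R V (T * real l / real n))"

(* (X^n_phi)_S^T (X^n_phi)_S, where the k-th row of X^n_phi is T^{phi,n}_k(X)^T *)
definition gram :: "real \<Rightarrow> (nat \<Rightarrow> real \<Rightarrow> real) \<Rightarrow> nat \<Rightarrow> (real \<Rightarrow> real^'d) \<Rightarrow> nat set \<Rightarrow> real^'d^'d" where
  "gram T \<phi> n X S = (\<chi> i j. \<Sum>k\<in>S. (Tphi T \<phi> n k X) $ i * (Tphi T \<phi> n k X) $ j)"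

definition lambda_min :: "real^'d^'d \<Rightarrow> real" where
  "lambda_min A = Min {e. \<exists>v. v \<noteq> 0 \<and> A *v v = e *\<^sub>R v}"

definition Ucal :: "(nat \<Rightarrow> nat) \<Rightarrow> nat \<Rightarrow> nat set set" where
  "Ucal c n = {S. S \<subseteq> {1..n} \<and> int (card S) = int n - int (c n)}"

definition L2inner :: "real \<Rightarrow> (real \<Rightarrow> real) \<Rightarrow> (real \<Rightarrow> real) \<Rightarrow> real" where
  "L2inner T f g = (LINT t:{0..T}|lborel. f t * g t)"

end

theory Submission
  imports Defs
begin

text \<open>
  (i) is the classical bound \<open>(n choose c) \<le> n\<^sup>c / c! \<le> (e n / c)\<^sup>c\<close>.

  (ii) By (A1), the sampled basis \<open>Q\<^sub>k\<^sub>l = \<phi>\<^sub>k(T l / n) / \<surd>n\<close>, \<open>k, l \<le> n\<close>, is an orthogonal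
  matrix, and \<open>\<eta>\<^sup>n\<^sub>\<phi> = Q \<xi> / \<surd>n\<close> for the i.i.d. Gaussian vector \<open>\<xi> = (\<eta>\<^bsub>T l / n\<^esub>)\<^sub>l\<close>.
  Products of centred Gaussians with equal variances are invariant under orthogonal maps: right
  multiplication by Givens rotations reduces an orthogonal matrix to one acting as \<open>\<plusminus>1\<close> on a
  single coordinate and orthogonally on the others, and a Givens rotation preserves the planar
  Gaussian because the planar Gaussian density is rotation invariant and a rotation is a product of
  three shears, which preserve Lebesgue measure by Fubini.

  (iii) The smallest eigenvalue of a Gram matrix is the minimum of its quadratic form on the unit
  sphere, so it grows with the index set. Any \<open>S \<in> \<U>\<^sub>n\<close> meets the set \<open>S'\<^sub>n\<close> of (A2) in at least
  \<open>c\<^sub>n + d\<close> indices, at least \<open>d\<close> of which lie outside \<open>G\<^sub>n\<close>; hence the event of (A2) is contained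
  in the event of (iii).
\<close>

section \<open>The binomial bound\<close>

lemma power_div_fact_le_exp:
  fixes x :: real
  assumes "x \<ge> 0"
  shows "x ^ k / fact k \<le> exp x"
proof -
  have s: "(\<lambda>n. x ^ n /\<^sub>R fact n) sums exp x" by (rule exp_converges)
  have "x ^ k / fact k = (\<Sum>n\<in>{k}. x ^ n /\<^sub>R fact n)" by (simp add: divide_inverse mult.commute)
  also have "\<dots> \<le> exp x"
    using sum_le_suminf[OF sums_summable[OF s], of "{k}"] s assms by (simp add: sums_iff)
  finally show ?thesis .
qed

lemma binomial_le_exp_pow:
  assumes "k \<le> n"
  shows "real (n choose k) \<le> (exp 1 * real n / real k) ^ k"
proof (cases "k = 0")
  case False
  have "real (n choose k) * fact k \<le> real n ^ k"
    using binomial_fact_pow[of n k] by (metis of_nat_fact of_nat_le_iff of_nat_mult of_nat_power)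
  then have "real (n choose k) \<le> real n ^ k / fact k" by (simp add: field_simps)
  also have "\<dots> = (real n / real k) ^ k * (real k ^ k / fact k)"
    using False by (simp add: field_simps)
  also have "\<dots> \<le> (real n / real k) ^ k * exp (real k)"
    by (intro mult_left_mono power_div_fact_le_exp) auto
  also have "\<dots> = (exp 1 * real n / real k) ^ k"
    by (simp add: power_mult_distrib exp_of_nat_mult[symmetric] power_divide mult.commute)
  finally show ?thesis .
qed simp

lemma finite_Ucal: "finite (Ucal c n)"
  by (rule finite_subset[of _ "Pow {1..n}"]) (auto simp: Ucal_def)

lemma card_Ucal_le: "real (card (Ucal c n)) \<le> (exp 1 * real n / real (c n)) ^ c n"
proof (cases "c n \<le> n")
  case True
  then have "Ucal c n = {S. S \<subseteq> {1..n} \<and> card S = n - c n}" unfolding Ucal_def by auto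
  then have "card (Ucal c n) = n choose c n"
    using True by (simp add: n_subsets binomial_symmetric[symmetric])
  then show ?thesis using binomial_le_exp_pow[OF True] by simp
next
  case False
  then have "Ucal c n = {}" unfolding Ucal_def by auto
  then show ?thesis by simp
qed

section \<open>Smallest eigenvalues of Gram matrices\<close>

lemma linear_coeff_eq_0_if_quadratic_nonneg:
  fixes a b :: real
  assumes nonneg: "\<And>t. 2 * t * a + t\<^sup>2 * b \<ge> 0" and "a \<ge> 0"
  shows "a = 0"
proof (rule ccontr)
  assume "a \<noteq> 0"
  with \<open>a \<ge> 0\<close> have "a > 0" by simp
  define B where "B = \<bar>b\<bar> + 1"
  have "B > 0" "b < B" unfolding B_def by auto
  define t where "t = - a / B"
  have "2 * t * a + t\<^sup>2 * b \<le> 2 * t * a + t\<^sup>2 * B"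
    using \<open>b < B\<close> by (simp add: mult_left_mono)
  also have "\<dots> = - a\<^sup>2 / B"
    using \<open>B > 0\<close> unfolding t_def by (simp add: field_simps power2_eq_square)
  also have "\<dots> < 0" using \<open>a > 0\<close> \<open>B > 0\<close> by simp
  finally show False using nonneg[of t] by simp
qed

lemma transpose_symmetric_inner:
  fixes A :: "real^'n^'n"
  assumes "transpose A = A"
  shows "x \<bullet> (A *v y) = y \<bullet> (A *v x)"
  by (metis assms dot_lmul_matrix inner_commute vector_transpose_matrix)

text \<open>Along the line through a minimiser \<open>u\<close> in the direction of its residual
  \<open>r = A u - m u\<close>, the quadratic form stays above \<open>m |.|\<^sup>2\<close>, which forces \<open>r = 0\<close>.\<close>
lemma rayleigh_minimizer_is_eigenvector:
  fixes A :: "real^'n^'n"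
  assumes sym: "transpose A = A"
    and min: "\<And>w. m * (norm w)\<^sup>2 \<le> w \<bullet> (A *v w)"
    and u: "norm u = 1" "u \<bullet> (A *v u) = m"
  shows "A *v u = m *\<^sub>R u"
proof -
  define r where "r = A *v u - m *\<^sub>R u"
  have "u \<bullet> u = 1" using u(1) by (simp add: dot_square_norm)
  then have ur: "u \<bullet> r = 0" unfolding r_def using u(2) by (simp add: inner_diff_right)
  have Ar: "r \<bullet> (A *v u) = r \<bullet> r" unfolding r_def
    using ur by (simp add: inner_diff_left inner_diff_right inner_commute r_def)
  have "2 * t * (r \<bullet> r) + t\<^sup>2 * (r \<bullet> (A *v r) - m * (r \<bullet> r)) \<ge> 0" for t
  proof -
    have "m * (norm (u + t *\<^sub>R r))\<^sup>2 \<le> (u + t *\<^sub>R r) \<bullet> (A *v (u + t *\<^sub>R r))" by (rule min)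
    moreover have "(norm (u + t *\<^sub>R r))\<^sup>2 = 1 + t\<^sup>2 * (r \<bullet> r)"
      using \<open>u \<bullet> u = 1\<close> ur
      unfolding power2_norm_eq_inner
      by (simp add: inner_add_left inner_add_right inner_commute power2_eq_square)
    moreover have "(u + t *\<^sub>R r) \<bullet> (A *v (u + t *\<^sub>R r))
        = m + 2 * t * (r \<bullet> r) + t\<^sup>2 * (r \<bullet> (A *v r))"
    proof -
      have "(u + t *\<^sub>R r) \<bullet> (A *v (u + t *\<^sub>R r))
          = u \<bullet> (A *v u) + t * (u \<bullet> (A *v r)) + t * (r \<bullet> (A *v u)) + t\<^sup>2 * (r \<bullet> (A *v r))"
        by (simp add: power2_eq_square algebra_simps)
      then show ?thesis using u(2) Ar transpose_symmetric_inner[OF sym, of u r] by simp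
    qed
    ultimately show ?thesis by (simp add: algebra_simps)
  qed
  then have "r \<bullet> r = 0" by (intro linear_coeff_eq_0_if_quadratic_nonneg) auto
  then show ?thesis unfolding r_def by simp
qed

lemma finite_eigenvalues_symmetric:
  fixes A :: "real^'n^'n"
  assumes sym: "transpose A = A"
  shows "finite {e. \<exists>v. v \<noteq> 0 \<and> A *v v = e *\<^sub>R v}"
proof -
  define E where "E = {e. \<exists>v. v \<noteq> 0 \<and> A *v v = e *\<^sub>R v}"
  define u where "u e = (SOME v. v \<noteq> 0 \<and> A *v v = e *\<^sub>R v)" for e
  have u: "u e \<noteq> 0 \<and> A *v u e = e *\<^sub>R u e" if "e \<in> E" for e
    using that unfolding E_def u_def by (metis (mono_tags, lifting) mem_Collect_eq)
  have inj: "inj_on u E"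
  proof (rule inj_onI)
    fix e1 e2 assume "e1 \<in> E" "e2 \<in> E" "u e1 = u e2"
    then have "e1 *\<^sub>R u e1 = e2 *\<^sub>R u e1" "u e1 \<noteq> 0" using u by metis+
    then show "e1 = e2" by (metis scaleR_cancel_right)
  qed
  have orth: "pairwise orthogonal (u ` E)"
  proof (clarsimp simp: pairwise_def)
    fix e1 e2 assume e: "e1 \<in> E" "e2 \<in> E" "u e1 \<noteq> u e2"
    then have ne: "e1 \<noteq> e2" by auto
    have "e1 * (u e1 \<bullet> u e2) = (A *v u e1) \<bullet> u e2" using u[OF e(1)] by simp
    also have "\<dots> = u e2 \<bullet> (A *v u e1)" by (simp add: inner_commute)
    also have "\<dots> = u e1 \<bullet> (A *v u e2)" by (rule transpose_symmetric_inner[OF sym])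
    also have "\<dots> = e2 * (u e1 \<bullet> u e2)" using u[OF e(2)] by simp
    finally have "(e1 - e2) * (u e1 \<bullet> u e2) = 0" by (simp add: algebra_simps)
    then show "orthogonal (u e1) (u e2)" using ne by (simp add: orthogonal_def)
  qed
  have "0 \<notin> u ` E" using u by auto
  then have "independent (u ` E)" using pairwise_orthogonal_independent[OF orth] by simp
  then have "finite (u ` E)" using independent_bound by blast
  then show ?thesis using finite_imageD[OF _ inj] unfolding E_def by blast
qed

lemma quadratic_form_attains_min_on_sphere:
  fixes A :: "real^'n^'n"
  obtains u where "norm u = 1" "\<And>w. (u \<bullet> (A *v u)) * (norm w)\<^sup>2 \<le> w \<bullet> (A *v w)"
proof -
  define f where "f w = w \<bullet> (A *v w)" for w
  have "continuous_on UNIV f" unfolding f_def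
    by (intro continuous_intros linear_continuous_on
        matrix_vector_mul_linear[unfolded linear_conv_bounded_linear])
  moreover have "axis undefined 1 \<in> sphere (0::real^'n) 1" by simp
  ultimately obtain u where u: "u \<in> sphere 0 1" "\<And>v. v \<in> sphere 0 1 \<Longrightarrow> f u \<le> f v"
    using continuous_attains_inf[OF compact_sphere, of 0 1 f]
    by (metis continuous_on_subset empty_iff top_greatest)
  have "f u * (norm w)\<^sup>2 \<le> f w" for w
  proof (cases "w = 0")
    case False
    then have "f u \<le> f (inverse (norm w) *\<^sub>R w)" by (intro u(2)) simp
    also have "\<dots> = f w / (norm w)\<^sup>2"
      by (simp add: f_def matrix_vector_mult_scaleR power2_eq_square divide_inverse mult.commute)
    finally show ?thesis using False by (simp add: field_simps)
  qed (simp add: f_def)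
  then show ?thesis using u(1) that unfolding f_def by simp
qed

lemma lambda_min_eq_min_quadratic_form:
  fixes A :: "real^'n^'n"
  assumes sym: "transpose A = A"
  obtains u where "norm u = 1" "lambda_min A = u \<bullet> (A *v u)"
    "\<And>w. lambda_min A * (norm w)\<^sup>2 \<le> w \<bullet> (A *v w)"
proof -
  define E where "E = {e. \<exists>v. v \<noteq> 0 \<and> A *v v = e *\<^sub>R v}"
  obtain u where u: "norm u = 1" "\<And>w. (u \<bullet> (A *v u)) * (norm w)\<^sup>2 \<le> w \<bullet> (A *v w)"
    using quadratic_form_attains_min_on_sphere by blast
  have "A *v u = (u \<bullet> (A *v u)) *\<^sub>R u"
    using rayleigh_minimizer_is_eigenvector[OF sym u(2) u(1) refl] .
  then have "u \<bullet> (A *v u) \<in> E" unfolding E_def using u(1) by (intro CollectI exI[of _ u]) auto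
  moreover have "u \<bullet> (A *v u) \<le> e" if "e \<in> E" for e
  proof -
    obtain v where v: "v \<noteq> 0" "A *v v = e *\<^sub>R v" using \<open>e \<in> E\<close> unfolding E_def by blast
    have "(u \<bullet> (A *v u)) * (norm v)\<^sup>2 \<le> e * (norm v)\<^sup>2"
      using u(2)[of v] v(2) by (simp add: power2_norm_eq_inner)
    then show ?thesis using v(1) by simp
  qed
  ultimately have "lambda_min A = u \<bullet> (A *v u)"
    unfolding lambda_min_def E_def[symmetric]
    using finite_eigenvalues_symmetric[OF sym] by (intro Min_eqI) (auto simp: E_def)
  then show ?thesis using that u by simp
qed

lemma lambda_min_ge_iff:
  fixes A :: "real^'n^'n"
  assumes "transpose A = A"
  shows "c \<le> lambda_min A \<longleftrightarrow> (\<forall>w. c * (norm w)\<^sup>2 \<le> w \<bullet> (A *v w))"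
proof -
  obtain u where u: "norm u = 1" "lambda_min A = u \<bullet> (A *v u)"
    "\<And>w. lambda_min A * (norm w)\<^sup>2 \<le> w \<bullet> (A *v w)"
    using lambda_min_eq_min_quadratic_form[OF assms] by blast
  show ?thesis
  proof
    assume "c \<le> lambda_min A"
    then show "\<forall>w. c * (norm w)\<^sup>2 \<le> w \<bullet> (A *v w)"
      using u(3) by (meson mult_right_mono order_trans zero_le_power2)
  qed (use u in \<open>metis mult.right_neutral power_one\<close>)
qed

lemma transpose_gram: "transpose (gram T \<phi> n X S) = gram T \<phi> n X S"
  by (simp add: gram_def transpose_def mult.commute)

lemma gram_quadratic_form:
  "w \<bullet> (gram T \<phi> n X S *v w) = (\<Sum>k\<in>S. (Tphi T \<phi> n k X \<bullet> w)\<^sup>2)"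
proof -
  have "gram T \<phi> n X S *v w = (\<Sum>k\<in>S. (Tphi T \<phi> n k X \<bullet> w) *\<^sub>R Tphi T \<phi> n k X)"
    unfolding vec_eq_iff gram_def matrix_vector_mult_def inner_vec_def
    by (simp add: sum_distrib_left sum_distrib_right sum.swap[of _ S] algebra_simps)
  then show ?thesis by (simp add: inner_sum_right inner_commute power2_eq_square)
qed

lemma lambda_min_gram_ge_iff:
  "c \<le> lambda_min (gram T \<phi> n X S) \<longleftrightarrow> (\<forall>w. c * (norm w)\<^sup>2 \<le> (\<Sum>k\<in>S. (Tphi T \<phi> n k X \<bullet> w)\<^sup>2))"
  by (simp add: lambda_min_ge_iff[OF transpose_gram] gram_quadratic_form)

lemma lambda_min_gram_mono:
  assumes "finite S'" "S \<subseteq> S'" "c \<le> lambda_min (gram T \<phi> n X S)"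
  shows "c \<le> lambda_min (gram T \<phi> n X S')"
proof -
  have "(\<Sum>k\<in>S. (Tphi T \<phi> n k X \<bullet> w)\<^sup>2) \<le> (\<Sum>k\<in>S'. (Tphi T \<phi> n k X \<bullet> w)\<^sup>2)" for w
    using assms(1,2) by (intro sum_mono2) auto
  then show ?thesis using assms(3) unfolding lambda_min_gram_ge_iff by (meson order_trans)
qed

lemma sample_point_in_interval:
  assumes "T \<ge> 0" "l \<in> {1..n}"
  shows "T * real l / real n \<in> {0..T}"
proof -
  have "T * real l \<le> T * real n" using assms by (intro mult_left_mono) auto
  then show ?thesis using assms by (auto simp: field_simps)
qed

lemma borel_measurable_Tphi:
  fixes X :: "real \<Rightarrow> 'a \<Rightarrow> 'b::{second_countable_topology, real_normed_vector}"
  assumes "T \<ge> 0" "\<forall>t\<in>{0..T}. X t \<in> borel_measurable M"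
  shows "(\<lambda>\<omega>. Tphi T \<phi> n k (\<lambda>t. X t \<omega>)) \<in> borel_measurable M"
  unfolding Tphi_def using assms sample_point_in_interval[OF assms(1)]
  by (intro borel_measurable_scaleR borel_measurable_const borel_measurable_sum) auto

lemma sets_lambda_min_gram_ge:
  fixes X :: "real \<Rightarrow> 'a \<Rightarrow> real^'d"
  assumes "T \<ge> 0" "\<forall>t\<in>{0..T}. X t \<in> borel_measurable M"
  shows "{\<omega>\<in>space M. c \<le> lambda_min (gram T \<phi> n (\<lambda>t. X t \<omega>) S)} \<in> sets M"
proof -
  obtain D :: "(real^'d) set" where D: "countable D" "D \<noteq> {}"
    "\<And>U. open U \<Longrightarrow> U \<noteq> {} \<Longrightarrow> \<exists>y \<in> D. y \<in> U"
    using countable_dense_exists by blast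
  define h where "h \<omega> w = (\<Sum>k\<in>S. (Tphi T \<phi> n k (\<lambda>t. X t \<omega>) \<bullet> w)\<^sup>2) - c * (norm w)\<^sup>2" for \<omega> w
  have dense: "(\<forall>w. h \<omega> w \<ge> 0) \<longleftrightarrow> (\<forall>i::nat. h \<omega> (from_nat_into D i) \<ge> 0)" for \<omega>
  proof
    assume H: "\<forall>i::nat. h \<omega> (from_nat_into D i) \<ge> 0"
    show "\<forall>w. h \<omega> w \<ge> 0"
    proof (rule ccontr)
      assume "\<not> (\<forall>w. h \<omega> w \<ge> 0)"
      then obtain w where w: "h \<omega> w < 0" by (meson not_le)
      have "open {w. h \<omega> w < 0}" unfolding h_def by (intro open_Collect_less continuous_intros)
      then obtain y where "y \<in> D" "h \<omega> y < 0" using D(3)[of "{w. h \<omega> w < 0}"] w by auto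
      then show False using H D(1,2) by (metis from_nat_into_surj not_le)
    qed
  qed auto
  have "\<And>k. (\<lambda>\<omega>. Tphi T \<phi> n k (\<lambda>t. X t \<omega>)) \<in> borel_measurable M"
    using borel_measurable_Tphi[OF assms] .
  then have "{\<omega>\<in>space M. \<forall>i::nat. h \<omega> (from_nat_into D i) \<ge> 0} \<in> sets M"
    unfolding h_def by measurable
  moreover have "{\<omega>\<in>space M. c \<le> lambda_min (gram T \<phi> n (\<lambda>t. X t \<omega>) S)}
      = {\<omega>\<in>space M. \<forall>i::nat. h \<omega> (from_nat_into D i) \<ge> 0}"
    using dense unfolding lambda_min_gram_ge_iff h_def by auto
  ultimately show ?thesis by simp
qed

text \<open>Among the \<open>2 c\<^sub>n + d\<close> indices of \<open>S'\<close>, at least \<open>c\<^sub>n + d\<close> lie in any \<open>S \<in> Ucal c n\<close>, and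
  removing the at most \<open>c\<^sub>n\<close> indices of \<open>G\<^sub>n\<close> still leaves \<open>d\<close> of them.\<close>
lemma Ucal_Diff_contains_subset:
  assumes S: "S \<in> Ucal c n" and S': "S' \<subseteq> {1..n}" "card S' = 2 * c n + d"
    and G: "card (G \<inter> {1..n}) \<le> c n"
  obtains S'' where "S'' \<subseteq> S' \<inter> (S - G \<inter> {1..n})" "card S'' = d"
proof -
  have Ssub: "S \<subseteq> {1..n}" and cS: "int (card S) = int n - int (c n)"
    using S unfolding Ucal_def by auto
  have fin: "finite S" "finite S'" using Ssub S'(1) finite_subset by blast+
  have "card (S \<union> S') \<le> n" using card_mono[of "{1..n}" "S \<union> S'"] Ssub S'(1) by auto
  then have "c n + d \<le> card (S' \<inter> S)" using card_Un_Int[OF fin] cS S'(2) by (simp add: Int_commute)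
  moreover have "card (S' \<inter> S) - card (G \<inter> {1..n}) \<le> card (S' \<inter> S - G \<inter> {1..n})"
    by (rule diff_card_le_card_Diff) simp
  ultimately have "d \<le> card (S' \<inter> (S - G \<inter> {1..n}))" using G by (simp add: Int_Diff)
  then show ?thesis using that by (meson obtain_subset_with_card_n)
qed

lemma lambda_min_gram_Ucal_ge:
  fixes X :: "real \<Rightarrow> real^'d"
  assumes "S' \<subseteq> {1..n}" "card S' = 2 * c n + CARD('d)" "card (G \<inter> {1..n}) \<le> c n"
    and S'_good: "\<forall>S''. S'' \<subseteq> S' \<and> card S'' = CARD('d) \<longrightarrow> a \<le> lambda_min (gram T \<phi> n X S'')"
    and S: "S \<in> Ucal c n"
  shows "a \<le> lambda_min (gram T \<phi> n X (S - G \<inter> {1..n}))"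
proof -
  obtain S'' where S'': "S'' \<subseteq> S' \<inter> (S - G \<inter> {1..n})" "card S'' = CARD('d)"
    using Ucal_Diff_contains_subset[OF S assms(1-3)] .
  have fin: "finite (S - G \<inter> {1..n})" using S unfolding Ucal_def by (auto intro: finite_subset)
  have "S'' \<subseteq> S - G \<inter> {1..n}" using S''(1) by blast
  moreover have "a \<le> lambda_min (gram T \<phi> n X S'')" using S'_good S'' by blast
  ultimately show ?thesis by (rule lambda_min_gram_mono[OF fin])
qed

lemma prob_lambda_min_gram_Ucal_ge:
  fixes X :: "real \<Rightarrow> 'a \<Rightarrow> real^'d" and M :: "'a measure"
  assumes M: "prob_space M" and T: "T \<ge> 0"
    and X_meas: "\<forall>t\<in>{0..T}. X t \<in> borel_measurable M"
    and c: "\<forall>n. card (G \<inter> {1..n}) \<le> c n"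
    and A2: "\<forall>\<delta>>0. \<exists>c'>0. \<exists>nbar. \<forall>n\<ge>nbar. \<exists>S'. S' \<subseteq> {1..n} \<and> card S' = 2 * c n + CARD('d) \<and>
               measure M {\<omega> \<in> space M. \<forall>S''. S'' \<subseteq> S' \<and> card S'' = CARD('d) \<longrightarrow>
                  lambda_min (gram T \<phi> n (\<lambda>t. X t \<omega>) S'') \<ge> c'} \<ge> 1 - \<delta>"
  shows "\<forall>\<delta>>0. \<exists>c'>0. \<exists>nbar. \<forall>n\<ge>nbar.
              measure M {\<omega> \<in> space M. \<forall>S\<in>Ucal c n.
                 sqrt (lambda_min (gram T \<phi> n (\<lambda>t. X t \<omega>) (S - G \<inter> {1..n}))) \<ge> c'} \<ge> 1 - \<delta>"
proof (intro allI impI)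
  interpret prob_space M by (rule M)
  fix \<delta> :: real
  assume "\<delta> > 0"
  then obtain a nbar where "a > 0"
    and nbar: "\<forall>n\<ge>nbar. \<exists>S'. S' \<subseteq> {1..n} \<and> card S' = 2 * c n + CARD('d) \<and>
      measure M {\<omega> \<in> space M. \<forall>S''. S'' \<subseteq> S' \<and> card S'' = CARD('d) \<longrightarrow>
        lambda_min (gram T \<phi> n (\<lambda>t. X t \<omega>) S'') \<ge> a} \<ge> 1 - \<delta>"
    using A2 by blast
  have "1 - \<delta> \<le> measure M {\<omega> \<in> space M. \<forall>S\<in>Ucal c n.
      sqrt a \<le> sqrt (lambda_min (gram T \<phi> n (\<lambda>t. X t \<omega>) (S - G \<inter> {1..n})))}" if "n \<ge> nbar" for n
  proof -
    obtain S' where S': "S' \<subseteq> {1..n}" "card S' = 2 * c n + CARD('d)"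
      and prob_S': "1 - \<delta> \<le> measure M {\<omega> \<in> space M. \<forall>S''. S'' \<subseteq> S' \<and> card S'' = CARD('d) \<longrightarrow>
        a \<le> lambda_min (gram T \<phi> n (\<lambda>t. X t \<omega>) S'')}"
      using nbar \<open>n \<ge> nbar\<close> by blast
    have "{\<omega> \<in> space M. \<forall>S\<in>Ucal c n.
        a \<le> lambda_min (gram T \<phi> n (\<lambda>t. X t \<omega>) (S - G \<inter> {1..n}))} \<in> sets M"
      using finite_Ucal sets_lambda_min_gram_ge[OF T X_meas] by (intro sets.sets_Collect_finite_All)
    then show ?thesis
      using lambda_min_gram_Ucal_ge[where c = c and n = n, OF S' c[rule_format, of n]]
      by (intro order_trans[OF prob_S'] finite_measure_mono) auto
  qed
  then show "\<exists>c'>0. \<exists>nbar. \<forall>n\<ge>nbar. measure M {\<omega> \<in> space M. \<forall>S\<in>Ucal c n.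
      sqrt (lambda_min (gram T \<phi> n (\<lambda>t. X t \<omega>) (S - G \<inter> {1..n}))) \<ge> c'} \<ge> 1 - \<delta>"
    using \<open>a > 0\<close> by (intro exI[of _ "sqrt a"]) auto
qed

section \<open>Rotation invariance of the planar Gaussian\<close>

lemma distr_comp_invariant:
  assumes "f \<in> measurable M M" "g \<in> measurable M M" "distr M M f = M" "distr M M g = M"
  shows "distr M M (g \<circ> f) = M"
  using assms by (simp add: distr_distr[symmetric])

lemma distr_invariant_via_factor:
  assumes F: "F \<in> measurable B A" and AF: "distr B A F = A" and f: "f \<in> measurable A A"
    and g: "g \<in> measurable B B" and gB: "distr B B g = B"
    and comm: "\<And>z. z \<in> space B \<Longrightarrow> f (F z) = F (g z)"
  shows "distr A A f = A"
proof -
  have "distr A A f = distr (distr B A F) A f" by (simp only: AF)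
  also have "\<dots> = distr B A (f \<circ> F)" using f F by (simp add: distr_distr)
  also have "\<dots> = distr B A (F \<circ> g)" by (rule distr_cong) (auto simp: comm)
  also have "\<dots> = distr (distr B B g) A F" using F g by (simp add: distr_distr)
  also have "\<dots> = A" by (simp only: gB AF)
  finally show ?thesis .
qed

lemma distr_density_invariant:
  assumes f: "f \<in> measurable L L" "distr L L f = L"
    and h: "h \<in> borel_measurable L" "\<And>z. z \<in> space L \<Longrightarrow> h (f z) = h z"
  shows "distr (density L h) (density L h) f = density L h"
proof (rule measure_eqI)
  fix A assume "A \<in> sets (distr (density L h) (density L h) f)"
  then have A: "A \<in> sets L" by simp
  have "f -` A \<inter> space L \<in> sets L" using f A by measurable
  then have "emeasure (distr (density L h) (density L h) f) A
      = (\<integral>\<^sup>+z. h z * indicator (f -` A \<inter> space L) z \<partial>L)"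
    using f A h by (simp add: emeasure_distr emeasure_density)
  also have "\<dots> = (\<integral>\<^sup>+z. h (f z) * indicator A (f z) \<partial>L)"
    by (rule nn_integral_cong) (auto simp: h split: split_indicator)
  also have "\<dots> = (\<integral>\<^sup>+w. h w * indicator A w \<partial>distr L L f)"
    using f h A by (subst nn_integral_distr) auto
  also have "\<dots> = emeasure (density L h) A" using f h A by (simp add: emeasure_density)
  finally show "emeasure (distr (density L h) (density L h) f) A = emeasure (density L h) A" .
qed simp

abbreviation lborel2 :: "(real \<times> real) measure" where
  "lborel2 \<equiv> lborel \<Otimes>\<^sub>M lborel"

lemma emeasure_lborel_translate:
  fixes c :: real
  assumes "B \<in> sets borel"
  shows "emeasure lborel ((\<lambda>y. y + c) -` B) = emeasure lborel B"
proof -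
  have "emeasure lborel B = emeasure (distr lborel borel ((+) c)) B"
    by (simp add: lborel_distr_plus)
  also have "\<dots> = emeasure lborel ((+) c -` B \<inter> space lborel)"
    using assms by (simp add: emeasure_distr)
  also have "(+) c -` B \<inter> space lborel = (\<lambda>y. y + c) -` B" by (auto simp: add.commute)
  finally show ?thesis ..
qed

text \<open>Fubini reduces invariance under the shear to translation invariance of each vertical slice.\<close>
lemma distr_vertical_shear_lborel2: "distr lborel2 lborel2 (\<lambda>(x, y). (x, y + a * x)) = lborel2"
proof (rule measure_eqI)
  fix A assume "A \<in> sets (distr lborel2 lborel2 (\<lambda>(x, y). (x, y + a * x)))"
  then have A: "A \<in> sets lborel2" by simp
  have f: "(\<lambda>(x, y). (x, y + a * x)) \<in> measurable lborel2 lborel2" by measurable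
  have pre: "(\<lambda>(x, y). (x, y + a * x)) -` A \<inter> space lborel2 \<in> sets lborel2" using f A by measurable
  have "emeasure (distr lborel2 lborel2 (\<lambda>(x, y). (x, y + a * x))) A
      = emeasure lborel2 ((\<lambda>(x, y). (x, y + a * x)) -` A \<inter> space lborel2)"
    using f A by (simp add: emeasure_distr)
  also have "\<dots>
      = (\<integral>\<^sup>+x. emeasure lborel (Pair x -` ((\<lambda>(x, y). (x, y + a * x)) -` A \<inter> space lborel2))
          \<partial>lborel)"
    using pre by (rule lborel.emeasure_pair_measure_alt)
  also have "\<dots> = (\<integral>\<^sup>+x. emeasure lborel (Pair x -` A) \<partial>lborel)"
  proof (rule nn_integral_cong)
    fix x :: real
    have "Pair x -` ((\<lambda>(x, y). (x, y + a * x)) -` A \<inter> space lborel2)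
        = (\<lambda>y. y + a * x) -` (Pair x -` A)"
      by (auto simp: space_pair_measure)
    then show "emeasure lborel (Pair x -` ((\<lambda>(x, y). (x, y + a * x)) -` A \<inter> space lborel2))
        = emeasure lborel (Pair x -` A)"
      using emeasure_lborel_translate sets_Pair1[OF A] by simp
  qed
  also have "\<dots> = emeasure lborel2 A" using lborel.emeasure_pair_measure_alt[OF A] by simp
  finally show "emeasure (distr lborel2 lborel2 (\<lambda>(x, y). (x, y + a * x))) A = emeasure lborel2 A" .
qed simp

lemma distr_horizontal_shear_lborel2: "distr lborel2 lborel2 (\<lambda>(x, y). (x + a * y, y)) = lborel2"
proof -
  let ?swap = "\<lambda>(x::real, y::real). (y, x)" and ?shear = "\<lambda>(x::real, y). (x, y + a * x)"
  have swap: "distr lborel2 lborel2 ?swap = lborel2"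
    by (rule pair_sigma_finite.distr_pair_swap[symmetric])
      (simp add: pair_sigma_finite_def lborel.sigma_finite_measure_axioms)
  have "(\<lambda>(x, y). (x + a * y, y)) = ?swap \<circ> ?shear \<circ> ?swap" by (auto simp: fun_eq_iff)
  moreover have "distr lborel2 lborel2 (?swap \<circ> ?shear \<circ> ?swap) = lborel2"
    using swap distr_vertical_shear_lborel2 by (intro distr_comp_invariant) auto
  ultimately show ?thesis by simp
qed

text \<open>A rotation with \<open>c > -1\<close> factors into three shears:
  with \<open>t = s / (1 + c)\<close>, it is \<open>(x, y) \<mapsto> (x - t y, y)\<close>, then \<open>(x, y) \<mapsto> (x, y + s x)\<close>,
  then \<open>(x, y) \<mapsto> (x - t y, y)\<close> again.\<close>
lemma distr_rotation_lborel2: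
  fixes c s :: real
  assumes cs: "c\<^sup>2 + s\<^sup>2 = 1" and c: "1 + c > 0"
  shows "distr lborel2 lborel2 (\<lambda>(x, y). (c * x - s * y, s * x + c * y)) = lborel2"
proof -
  define t where "t = s / (1 + c)"
  define H where "H = (\<lambda>(x::real, y::real). (x + (- t) * y, y))"
  define V where "V = (\<lambda>(x::real, y::real). (x, y + s * x))"
  have ts: "t * s = 1 - c"
  proof -
    have "t * s = (1 - c) * (1 + c) / (1 + c)"
      using cs unfolding t_def by (simp add: power2_eq_square algebra_simps)
    then show ?thesis using c by simp
  qed
  have tc: "t * (1 + c) = s" unfolding t_def using c by simp
  have "H \<circ> V \<circ> H = (\<lambda>(x, y). (c * x - s * y, s * x + c * y))"
  proof (rule ext, clarify)
    fix x y :: real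
    have "(H \<circ> V \<circ> H) (x, y) = (x * (1 - t * s) - y * (t * (2 - t * s)), s * x + y * (1 - t * s))"
      unfolding H_def V_def by (simp add: algebra_simps)
    also have "\<dots> = (c * x - s * y, s * x + c * y)"
    proof -
      have "1 - t * s = c" "t * (2 - t * s) = s" using ts tc by simp_all
      then show ?thesis by (simp only:) (simp add: algebra_simps)
    qed
    finally show "(H \<circ> V \<circ> H) (x, y) = (c * x - s * y, s * x + c * y)" .
  qed
  moreover have "distr lborel2 lborel2 (H \<circ> V \<circ> H) = lborel2"
  proof -
    have "H \<in> measurable lborel2 lborel2" "V \<in> measurable lborel2 lborel2"
      unfolding H_def V_def by measurable
    moreover have "distr lborel2 lborel2 H = lborel2" "distr lborel2 lborel2 V = lborel2"
      unfolding H_def V_def by (rule distr_horizontal_shear_lborel2 distr_vertical_shear_lborel2)+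
    ultimately show ?thesis by (intro distr_comp_invariant measurable_comp)
  qed
  ultimately show ?thesis by simp
qed

abbreviation gaussian :: "real \<Rightarrow> real measure" where
  "gaussian \<sigma> \<equiv> density lborel (\<lambda>x. ennreal (normal_density 0 \<sigma> x))"

lemma measurable_gaussian: "measurable M (gaussian \<sigma>) = borel_measurable M"
  by (rule measurable_cong_sets) simp_all

lemma distr_mult_gaussian:
  fixes X :: "'a \<Rightarrow> real"
  assumes M: "prob_space M" and \<sigma>: "\<sigma> > 0" and a: "a \<noteq> 0"
    and X: "X \<in> borel_measurable M" "distr M borel X = gaussian \<sigma>"
  shows "distr M borel (\<lambda>\<omega>. a * X \<omega>) = gaussian (\<bar>a\<bar> * \<sigma>)"
proof -
  interpret prob_space M by (rule M)
  have "distributed M lborel X (normal_density 0 \<sigma>)"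
    unfolding distributed_def using X by (simp add: distr_cong[OF refl sets_lborel[symmetric]])
  then have "distributed M lborel (\<lambda>\<omega>. 0 + a * X \<omega>) (normal_density (0 + a * 0) (\<bar>a\<bar> * \<sigma>))"
    by (rule normal_density_affine[OF _ \<sigma> a])
  then show ?thesis
    unfolding distributed_def by (simp add: distr_cong[OF refl sets_lborel[symmetric]])
qed

lemma normal_density_rotation:
  fixes c s x y \<sigma> :: real
  assumes "c\<^sup>2 + s\<^sup>2 = 1"
  shows "normal_density 0 \<sigma> (c * x - s * y) * normal_density 0 \<sigma> (s * x + c * y)
       = normal_density 0 \<sigma> x * normal_density 0 \<sigma> y"
proof -
  have exp_prod: "exp (- (a / D)) * exp (- (b / D)) = exp (- ((a + b) / D))" for a b D :: real
    by (simp add: exp_add[symmetric] add_divide_distrib)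
  have "(c * x - s * y)\<^sup>2 + (s * x + c * y)\<^sup>2 = (c\<^sup>2 + s\<^sup>2) * (x\<^sup>2 + y\<^sup>2)"
    by (simp add: power2_eq_square algebra_simps)
  then have "(c * x - s * y)\<^sup>2 + (s * x + c * y)\<^sup>2 = x\<^sup>2 + y\<^sup>2" using assms by simp
  then show ?thesis unfolding normal_density_def
    by (simp add: exp_prod)
qed

lemma distr_rotation_gaussian_pair:
  fixes c s \<sigma> :: real
  assumes cs: "c\<^sup>2 + s\<^sup>2 = 1" and c: "1 + c > 0" and \<sigma>: "\<sigma> > 0"
  shows "distr (gaussian \<sigma> \<Otimes>\<^sub>M gaussian \<sigma>) (gaussian \<sigma> \<Otimes>\<^sub>M gaussian \<sigma>)
           (\<lambda>(x, y). (c * x - s * y, s * x + c * y))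
       = gaussian \<sigma> \<Otimes>\<^sub>M gaussian \<sigma>"
proof -
  define h where "h = (\<lambda>(x, y). ennreal (normal_density 0 \<sigma> x) * ennreal (normal_density 0 \<sigma> y))"
  interpret gaussian: prob_space "gaussian \<sigma>" using prob_space_normal_density[OF \<sigma>] by simp
  have "gaussian \<sigma> \<Otimes>\<^sub>M gaussian \<sigma> = density lborel2 h" unfolding h_def
    by (rule pair_measure_density)
      (auto intro: gaussian.sigma_finite_measure_axioms lborel.sigma_finite_measure_axioms)
  moreover have "distr (density lborel2 h) (density lborel2 h)
      (\<lambda>(x, y). (c * x - s * y, s * x + c * y))
      = density lborel2 h"
  proof (rule distr_density_invariant)
    show "(\<lambda>(x, y). (c * x - s * y, s * x + c * y)) \<in> measurable lborel2 lborel2" by measurable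
    show "distr lborel2 lborel2 (\<lambda>(x, y). (c * x - s * y, s * x + c * y)) = lborel2"
      by (rule distr_rotation_lborel2[OF cs c])
    show "h \<in> borel_measurable lborel2" unfolding h_def by measurable
    show "h ((\<lambda>(x, y). (c * x - s * y, s * x + c * y)) z) = h z" for z
      using normal_density_rotation[OF cs, of \<sigma> "fst z" "snd z"]
      by (simp add: h_def case_prod_beta ennreal_mult'[symmetric])
  qed
  ultimately show ?thesis by simp
qed

section \<open>Orthogonal matrices on finite index sets\<close>

definition mat_apply :: "nat set \<Rightarrow> (nat \<Rightarrow> nat \<Rightarrow> real) \<Rightarrow> (nat \<Rightarrow> real) \<Rightarrow> nat \<Rightarrow> real" where
  "mat_apply I Q x = (\<lambda>k\<in>I. \<Sum>l\<in>I. Q k l * x l)"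

definition orthonormal_rows :: "nat set \<Rightarrow> (nat \<Rightarrow> nat \<Rightarrow> real) \<Rightarrow> bool" where
  "orthonormal_rows I Q \<longleftrightarrow> (\<forall>k\<in>I. \<forall>k'\<in>I. (\<Sum>l\<in>I. Q k l * Q k' l) = (if k = k' then 1 else 0))"

definition givens :: "nat \<Rightarrow> nat \<Rightarrow> real \<Rightarrow> real \<Rightarrow> (nat \<Rightarrow> real) \<Rightarrow> nat \<Rightarrow> real" where
  "givens i j c s x = x(i := c * x i - s * x j, j := s * x i + c * x j)"

definition rotate_columns ::
    "(nat \<Rightarrow> nat \<Rightarrow> real) \<Rightarrow> nat \<Rightarrow> nat \<Rightarrow> real \<Rightarrow> real \<Rightarrow> nat \<Rightarrow> nat \<Rightarrow> real" where
  "rotate_columns Q i j c s = (\<lambda>k l. if l = i then c * Q k i + s * Q k j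
     else if l = j then - s * Q k i + c * Q k j else Q k l)"

lemma sum_remove2:
  fixes f :: "nat \<Rightarrow> real"
  assumes "finite I" "i \<in> I" "j \<in> I" "i \<noteq> j"
  shows "(\<Sum>l\<in>I. f l) = f i + f j + (\<Sum>l\<in>I - {i, j}. f l)"
proof -
  have "(\<Sum>l\<in>I. f l) = f i + (\<Sum>l\<in>I - {i}. f l)" using assms by (simp add: sum.remove)
  also have "(\<Sum>l\<in>I - {i}. f l) = f j + (\<Sum>l\<in>I - {i} - {j}. f l)"
    using assms by (intro sum.remove) auto
  also have "I - {i} - {j} = I - {i, j}" by auto
  finally show ?thesis by (simp add: add.assoc)
qed

lemma mat_apply_rotate_columns:
  assumes "finite I" "i \<in> I" "j \<in> I" "i \<noteq> j"
  shows "mat_apply I (rotate_columns Q i j c s) = mat_apply I Q \<circ> givens i j c s"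
proof -
  have "(\<Sum>l\<in>I. rotate_columns Q i j c s k l * x l) = (\<Sum>l\<in>I. Q k l * givens i j c s x l)" for k x
  proof -
    have "(\<Sum>l\<in>I - {i, j}. rotate_columns Q i j c s k l * x l)
        = (\<Sum>l\<in>I - {i, j}. Q k l * givens i j c s x l)"
      by (rule sum.cong) (auto simp: rotate_columns_def givens_def)
    then show ?thesis using assms
      by (simp add: sum_remove2[OF assms] rotate_columns_def givens_def algebra_simps)
  qed
  then show ?thesis unfolding mat_apply_def by (simp add: fun_eq_iff)
qed

lemma orthonormal_rows_rotate_columns:
  assumes "finite I" "i \<in> I" "j \<in> I" "i \<noteq> j" "c\<^sup>2 + s\<^sup>2 = 1" "orthonormal_rows I Q"
  shows "orthonormal_rows I (rotate_columns Q i j c s)"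
  unfolding orthonormal_rows_def
proof (intro ballI)
  fix k k' assume k: "k \<in> I" "k' \<in> I"
  let ?R = "rotate_columns Q i j c s"
  have "(\<Sum>l\<in>I - {i, j}. ?R k l * ?R k' l) = (\<Sum>l\<in>I - {i, j}. Q k l * Q k' l)"
    by (rule sum.cong) (auto simp: rotate_columns_def)
  moreover have "?R k i * ?R k' i + ?R k j * ?R k' j
      = (c\<^sup>2 + s\<^sup>2) * (Q k i * Q k' i + Q k j * Q k' j)"
    using assms(4) by (simp add: rotate_columns_def algebra_simps power2_eq_square)
  ultimately have "(\<Sum>l\<in>I. ?R k l * ?R k' l) = (\<Sum>l\<in>I. Q k l * Q k' l)"
    using assms(5) by (simp add: sum_remove2[OF assms(1-4)])
  then show "(\<Sum>l\<in>I. ?R k l * ?R k' l) = (if k = k' then 1 else 0)"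
    using assms(6) k unfolding orthonormal_rows_def by simp
qed

lemma givens_annihilating_entry:
  fixes a b :: real
  assumes "b \<noteq> 0"
  obtains c s where "c\<^sup>2 + s\<^sup>2 = 1" "1 + c > 0" "- s * a + c * b = 0"
proof -
  define r where "r = (if a < 0 then - sqrt (a\<^sup>2 + b\<^sup>2) else sqrt (a\<^sup>2 + b\<^sup>2))"
  have pos: "a\<^sup>2 + b\<^sup>2 > 0" using assms by (simp add: add_nonneg_pos)
  have r2: "r\<^sup>2 = a\<^sup>2 + b\<^sup>2" unfolding r_def using pos by auto
  have "r \<noteq> 0" using r2 pos by auto
  have "(a / r)\<^sup>2 + (b / r)\<^sup>2 = 1"
    using r2 \<open>r \<noteq> 0\<close> assms by (simp add: power_divide add_divide_distrib[symmetric])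
  moreover have "a / r \<ge> 0"
  proof (cases "a < 0")
    case True
    then have "r < 0" unfolding r_def using pos by simp
    then show ?thesis using True by (simp add: divide_neg_neg less_imp_le)
  next
    case False
    then have "r > 0" unfolding r_def using pos by simp
    then show ?thesis using False by simp
  qed
  moreover have "- (b / r) * a + (a / r) * b = 0" by (simp add: algebra_simps)
  ultimately show ?thesis using that[of "a / r" "b / r"] by simp
qed

lemma orthonormal_rows_insert_unit_row:
  assumes J: "finite J" "i0 \<notin> J" and Q: "orthonormal_rows (insert i0 J) Q"
    and row: "\<And>l. l \<in> J \<Longrightarrow> Q i0 l = 0"
  shows "(Q i0 i0)\<^sup>2 = 1" "\<And>k. k \<in> J \<Longrightarrow> Q k i0 = 0" "orthonormal_rows J Q"
proof -
  have "(\<Sum>l\<in>insert i0 J. Q i0 l * Q i0 l) = 1" using Q unfolding orthonormal_rows_def by auto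
  then show a2: "(Q i0 i0)\<^sup>2 = 1" using J row by (simp add: power2_eq_square)
  show col: "Q k i0 = 0" if k: "k \<in> J" for k
  proof -
    have "(\<Sum>l\<in>insert i0 J. Q k l * Q i0 l) = 0"
      using Q k J(2) unfolding orthonormal_rows_def by auto
    then have "Q k i0 * Q i0 i0 = 0" using J row by simp
    then show ?thesis using a2 by auto
  qed
  show "orthonormal_rows J Q" unfolding orthonormal_rows_def
  proof (intro ballI)
    fix k k' assume k: "k \<in> J" "k' \<in> J"
    have "(\<Sum>l\<in>insert i0 J. Q k l * Q k' l) = (if k = k' then 1 else 0)"
      using Q k unfolding orthonormal_rows_def by auto
    then show "(\<Sum>l\<in>J. Q k l * Q k' l) = (if k = k' then 1 else 0)" using J col k by simp
  qed
qed

lemma mat_apply_insert_unit_row: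
  assumes J: "finite J" "i0 \<notin> J" and row: "\<And>l. l \<in> J \<Longrightarrow> Q i0 l = 0"
    and col: "\<And>k. k \<in> J \<Longrightarrow> Q k i0 = 0"
  shows "mat_apply (insert i0 J) Q (X(i0 := x)) = (mat_apply J Q X)(i0 := Q i0 i0 * x)"
proof (rule ext)
  fix k
  have "(\<Sum>l\<in>J. Q k l * (X(i0 := x)) l) = (\<Sum>l\<in>J. Q k l * X l)"
    using J(2) by (intro sum.cong) auto
  then show "mat_apply (insert i0 J) Q (X(i0 := x)) k = ((mat_apply J Q X)(i0 := Q i0 i0 * x)) k"
    using J row col[of k] by (cases "k = i0") (auto simp: mat_apply_def)
qed

lemma inj_on_sample_points:
  assumes "T > 0" "n > 0"
  shows "inj_on (\<lambda>l. T * real l / real n) {1..n}"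
  using assms by (auto simp: inj_on_def field_simps)

lemma Tphi_real: "Tphi T \<phi> n k V
    = (1 / real n) * (\<Sum>l=1..n. \<phi> k (T * real l / real n) * V (T * real l / real n))"
  by (simp add: Tphi_def)

lemma orthonormal_rows_sampled_basis:
  assumes n: "n > 0"
    and A1: "\<And>l k. 1 \<le> l \<and> l \<le> n \<and> 1 \<le> k \<and> k \<le> n \<Longrightarrow>
               (1 / real n) * (\<Sum>j=1..n. \<phi> l (T * real j / real n) * \<phi> k (T * real j / real n))
               = (if l = k then 1 else 0)"
  shows "orthonormal_rows {1..n} (\<lambda>k l. \<phi> k (T * real l / real n) / sqrt (real n))"
  unfolding orthonormal_rows_def
proof (intro ballI)
  fix k k' assume k: "k \<in> {1..n}" "k' \<in> {1..n}"
  have "(\<Sum>l\<in>{1..n}. \<phi> k (T * real l / real n) / sqrt (real n)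
      * (\<phi> k' (T * real l / real n) / sqrt (real n)))
      = (1 / real n) * (\<Sum>j=1..n. \<phi> k (T * real j / real n) * \<phi> k' (T * real j / real n))"
    using n by (simp add: sum_distrib_left field_simps)
  then show "(\<Sum>l\<in>{1..n}. \<phi> k (T * real l / real n) / sqrt (real n)
      * (\<phi> k' (T * real l / real n) / sqrt (real n)))
      = (if k = k' then 1 else 0)"
    using A1[of k k'] k by simp
qed

definition pair_fun :: "'i \<Rightarrow> 'i \<Rightarrow> real \<times> real \<Rightarrow> 'i \<Rightarrow> real" where
  "pair_fun i j = (\<lambda>(x, y). \<lambda>k\<in>{i, j}. if k = i then x else y)"

section \<open>Orthogonal invariance of Gaussian product measures\<close>

context
  fixes \<sigma> :: real
  assumes \<sigma>: "0 < \<sigma>"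
begin

abbreviation gaussian_PiM :: "'i set \<Rightarrow> ('i \<Rightarrow> real) measure" where
  "gaussian_PiM I \<equiv> PiM I (\<lambda>_. gaussian \<sigma>)"

lemma prob_space_gaussian: "prob_space (gaussian \<sigma>)" using prob_space_normal_density[OF \<sigma>] by simp

lemma product_sigma_finite_gaussian: "product_sigma_finite (\<lambda>_::'i. gaussian \<sigma>)"
  unfolding product_sigma_finite_def using prob_space_gaussian prob_space_imp_sigma_finite by blast

lemma sigma_finite_gaussian_PiM: "sigma_finite_measure (gaussian_PiM I)"
  using prob_space_PiM[OF prob_space_gaussian] prob_space_imp_sigma_finite by blast

lemma measurable_component_gaussian_PiM: "k \<in> I \<Longrightarrow> (\<lambda>x. x k) \<in> borel_measurable (gaussian_PiM I)"
  using measurable_component_singleton[of k I "\<lambda>_. gaussian \<sigma>"] by (simp add: measurable_gaussian)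

lemma measurable_mat_apply: "mat_apply I Q \<in> measurable (gaussian_PiM I) (gaussian_PiM I)"
  unfolding mat_apply_def
proof (rule measurable_restrict)
  fix k assume "k \<in> I"
  have "(\<lambda>x. \<Sum>l\<in>I. Q k l * x l) \<in> borel_measurable (gaussian_PiM I)"
  proof (rule borel_measurable_sum)
    fix l assume "l \<in> I"
    then have "(\<lambda>x. x l) \<in> measurable (gaussian_PiM I) (gaussian \<sigma>)"
      by (rule measurable_component_singleton)
    then have "(\<lambda>x. x l) \<in> borel_measurable (gaussian_PiM I)" by (simp add: measurable_gaussian)
    then show "(\<lambda>x. Q k l * x l) \<in> borel_measurable (gaussian_PiM I)" by measurable
  qed
  then show "(\<lambda>x. \<Sum>l\<in>I. Q k l * x l) \<in> measurable (gaussian_PiM I) (gaussian \<sigma>)"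
    by (simp add: measurable_gaussian)
qed

lemma measurable_givens:
  assumes "i \<in> I" "j \<in> I"
  shows "givens i j c s \<in> measurable (gaussian_PiM I) (gaussian_PiM I)"
proof -
  have "(\<lambda>x. \<lambda>k\<in>I. givens i j c s x k) \<in> measurable (gaussian_PiM I) (gaussian_PiM I)"
  proof (rule measurable_restrict)
    fix k assume k: "k \<in> I"
    have "(\<lambda>x. givens i j c s x k) \<in> borel_measurable (gaussian_PiM I)"
      unfolding givens_def
      using measurable_component_gaussian_PiM[OF assms(1)] measurable_component_gaussian_PiM[OF assms(2)]
        measurable_component_gaussian_PiM[OF k]
      by (cases "k = j"; cases "k = i") (simp_all, measurable)
    then show "(\<lambda>x. givens i j c s x k) \<in> measurable (gaussian_PiM I) (gaussian \<sigma>)"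
      by (simp add: measurable_gaussian)
  qed
  moreover have "(\<lambda>k\<in>I. givens i j c s x k) = givens i j c s x"
    if "x \<in> space (gaussian_PiM I)" for x
    using that assms by (auto simp: givens_def space_PiM PiE_def extensional_def)
  ultimately show ?thesis by (simp cong: measurable_cong)
qed

abbreviation gaussian_pair where "gaussian_pair \<equiv> gaussian \<sigma> \<Otimes>\<^sub>M gaussian \<sigma>"

lemma measurable_pair_fun: "pair_fun i j \<in> measurable gaussian_pair (gaussian_PiM {i, j})"
proof -
  have "(\<lambda>p. \<lambda>k\<in>{i, j}. if k = i then fst p else snd p) \<in> measurable gaussian_pair (gaussian_PiM {i, j})"
  proof (rule measurable_restrict)
    fix k assume "k \<in> {i, j}"
    show "(\<lambda>p. if k = i then fst p else snd p) \<in> measurable gaussian_pair (gaussian \<sigma>)"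
      by (cases "k = i") simp_all
  qed
  moreover have "pair_fun i j = (\<lambda>p. \<lambda>k\<in>{i, j}. if k = i then fst p else snd p)"
    by (auto simp: pair_fun_def fun_eq_iff)
  ultimately show ?thesis by simp
qed

lemma distr_pair_fun_gaussian:
  assumes ij: "i \<noteq> j"
  shows "distr gaussian_pair (gaussian_PiM {i, j}) (pair_fun i j) = gaussian_PiM {i, j}"
proof (rule product_sigma_finite.PiM_eqI[OF product_sigma_finite_gaussian])
  interpret gaussian: sigma_finite_measure "gaussian \<sigma>"
    using prob_space_gaussian prob_space_imp_sigma_finite by blast
  fix A assume A: "\<And>k. k \<in> {i, j} \<Longrightarrow> A k \<in> sets (gaussian \<sigma>)"
  have "pair_fun i j -` (\<Pi>\<^sub>E k\<in>{i, j}. A k) \<inter> space gaussian_pair = A i \<times> A j"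
    using ij by (auto simp: pair_fun_def space_pair_measure PiE_def Pi_def extensional_def)
  then have "emeasure (distr gaussian_pair (gaussian_PiM {i, j}) (pair_fun i j)) (\<Pi>\<^sub>E k\<in>{i, j}. A k)
      = emeasure gaussian_pair (A i \<times> A j)"
    using A by (subst emeasure_distr[OF measurable_pair_fun]) (auto intro!: sets_PiM_I_finite)
  also have "\<dots> = emeasure (gaussian \<sigma>) (A i) * emeasure (gaussian \<sigma>) (A j)"
    using A by (intro gaussian.emeasure_pair_measure_Times) auto
  also have "\<dots> = (\<Prod>k\<in>{i, j}. emeasure (gaussian \<sigma>) (A k))" using ij by simp
  finally show "emeasure (distr gaussian_pair (gaussian_PiM {i, j}) (pair_fun i j)) (\<Pi>\<^sub>E k\<in>{i, j}. A k)
      = (\<Prod>k\<in>{i, j}. emeasure (gaussian \<sigma>) (A k))" .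
qed simp_all

lemma distr_merge_pair_gaussian_PiM:
  fixes I :: "'i set"
  assumes I: "finite I" "i \<in> I" "j \<in> I" "i \<noteq> j"
  defines "F \<equiv> \<lambda>(p, X). merge {i, j} (I - {i, j}) (pair_fun i j p, X)"
  shows "F \<in> measurable (gaussian_pair \<Otimes>\<^sub>M gaussian_PiM (I - {i, j})) (gaussian_PiM I)"
    and "distr (gaussian_pair \<Otimes>\<^sub>M gaussian_PiM (I - {i, j})) (gaussian_PiM I) F = gaussian_PiM I"
proof -
  define K where "K = I - {i, j}"
  define H where "H = (\<lambda>(p, X). (pair_fun i j p, X :: 'i \<Rightarrow> real))"
  have F: "F = merge {i, j} K \<circ> H" unfolding F_def H_def K_def by (auto simp: fun_eq_iff)
  have IK: "{i, j} \<union> K = I" using I unfolding K_def by auto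
  have mH: "H \<in> measurable (gaussian_pair \<Otimes>\<^sub>M gaussian_PiM K)
      (gaussian_PiM {i, j} \<Otimes>\<^sub>M gaussian_PiM K)"
    unfolding H_def using measurable_pair_fun by measurable
  have mmerge:
    "merge {i, j} K \<in> measurable (gaussian_PiM {i, j} \<Otimes>\<^sub>M gaussian_PiM K) (gaussian_PiM I)"
    using measurable_merge[of "{i, j}" K "\<lambda>_. gaussian \<sigma>"] IK by simp
  show "F \<in> measurable (gaussian_pair \<Otimes>\<^sub>M gaussian_PiM (I - {i, j})) (gaussian_PiM I)"
    unfolding F K_def[symmetric] using mH mmerge by (rule measurable_comp)
  have "distr gaussian_pair (gaussian_PiM {i, j}) (pair_fun i j)
        \<Otimes>\<^sub>M distr (gaussian_PiM K) (gaussian_PiM K) (\<lambda>X. X)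
      = distr (gaussian_pair \<Otimes>\<^sub>M gaussian_PiM K) (gaussian_PiM {i, j} \<Otimes>\<^sub>M gaussian_PiM K) H"
    unfolding H_def
    by (rule pair_measure_distr[OF measurable_pair_fun measurable_ident_sets[OF refl]])
      (simp add: sigma_finite_gaussian_PiM)
  then have dH:
    "distr (gaussian_pair \<Otimes>\<^sub>M gaussian_PiM K) (gaussian_PiM {i, j} \<Otimes>\<^sub>M gaussian_PiM K) H
      = gaussian_PiM {i, j} \<Otimes>\<^sub>M gaussian_PiM K"
    by (simp add: distr_pair_fun_gaussian[OF I(4)])
  have "distr (gaussian_pair \<Otimes>\<^sub>M gaussian_PiM K) (gaussian_PiM I) F
      = distr (gaussian_PiM {i, j} \<Otimes>\<^sub>M gaussian_PiM K) (gaussian_PiM I) (merge {i, j} K)"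
    unfolding F distr_distr[OF mmerge mH, symmetric] dH ..
  also have "\<dots> = gaussian_PiM I"
    using product_sigma_finite.distr_merge[OF product_sigma_finite_gaussian, of "{i, j}" K] I IK
    unfolding K_def by auto
  finally show "distr (gaussian_pair \<Otimes>\<^sub>M gaussian_PiM (I - {i, j})) (gaussian_PiM I) F = gaussian_PiM I"
    unfolding K_def .
qed

text \<open>A Givens rotation factors through the product of the planar Gaussian in the coordinates
  \<open>i, j\<close> and the Gaussian in the remaining ones, where it acts as a planar rotation.\<close>
lemma distr_givens_gaussian_PiM:
  assumes I: "finite I" "i \<in> I" "j \<in> I" "i \<noteq> j" and cs: "c\<^sup>2 + s\<^sup>2 = 1" "1 + c > 0"
  shows "distr (gaussian_PiM I) (gaussian_PiM I) (givens i j c s) = gaussian_PiM I"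
proof (rule distr_invariant_via_factor)
  define \<rho> where "\<rho> = (\<lambda>(x::real, y::real). (c * x - s * y, s * x + c * y))"
  let ?B = "gaussian_pair \<Otimes>\<^sub>M gaussian_PiM (I - {i, j})"
  let ?F = "\<lambda>(p, X). merge {i, j} (I - {i, j}) (pair_fun i j p, X)"
  show "?F \<in> measurable ?B (gaussian_PiM I)" "distr ?B (gaussian_PiM I) ?F = gaussian_PiM I"
    using distr_merge_pair_gaussian_PiM[OF I] by simp_all
  show "givens i j c s \<in> measurable (gaussian_PiM I) (gaussian_PiM I)"
    by (rule measurable_givens[OF I(2,3)])
  have m\<rho>: "\<rho> \<in> measurable gaussian_pair gaussian_pair" unfolding \<rho>_def by measurable
  then show "(\<lambda>(p, X). (\<rho> p, X)) \<in> measurable ?B ?B" by measurable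
  have "distr gaussian_pair gaussian_pair \<rho>
        \<Otimes>\<^sub>M distr (gaussian_PiM (I - {i, j})) (gaussian_PiM (I - {i, j})) (\<lambda>X. X)
      = distr ?B ?B (\<lambda>(p, X). (\<rho> p, X))"
    by (rule pair_measure_distr[OF m\<rho> measurable_ident_sets[OF refl]])
      (simp add: sigma_finite_gaussian_PiM)
  moreover have "distr gaussian_pair gaussian_pair \<rho> = gaussian_pair"
    unfolding \<rho>_def by (rule distr_rotation_gaussian_pair[OF cs \<sigma>])
  ultimately show "distr ?B ?B (\<lambda>(p, X). (\<rho> p, X)) = ?B" by simp
  show "givens i j c s (?F z) = ?F ((\<lambda>(p, X). (\<rho> p, X)) z)" for z
    using I(4) unfolding \<rho>_def givens_def pair_fun_def
    by (auto simp: merge_def fun_eq_iff split: prod.split)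
qed

lemma distr_sign_gaussian:
  assumes "a\<^sup>2 = (1::real)"
  shows "distr (gaussian \<sigma>) (gaussian \<sigma>) (\<lambda>x. a * x) = gaussian \<sigma>"
proof -
  have "\<bar>a\<bar> = 1" "a \<noteq> 0" using assms by (auto simp: power2_eq_1_iff)
  moreover have "distr (gaussian \<sigma>) borel (\<lambda>x. x) = distr (gaussian \<sigma>) (gaussian \<sigma>) (\<lambda>x. x)"
    by (rule distr_cong) simp_all
  ultimately have "distr (gaussian \<sigma>) borel (\<lambda>x. a * x) = gaussian \<sigma>"
    using distr_mult_gaussian[OF prob_space_gaussian \<sigma>, of a "\<lambda>x. x"] by simp
  moreover have "distr (gaussian \<sigma>) (gaussian \<sigma>) (\<lambda>x. a * x) = distr (gaussian \<sigma>) borel (\<lambda>x. a * x)"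
    by (rule distr_cong) simp_all
  ultimately show ?thesis by simp
qed

lemma measurable_fun_upd_gaussian_PiM:
  "(\<lambda>(x, X). X(i0 := x)) \<in> measurable (gaussian \<sigma> \<Otimes>\<^sub>M gaussian_PiM J) (gaussian_PiM (insert i0 J))"
proof -
  have "(\<lambda>(x, X). X(i0 := x)) = (\<lambda>(f, y). f(i0 := y)) \<circ> (\<lambda>(x, X). (X, x :: real))" by auto
  then show ?thesis using measurable_comp[OF measurable_pair_swap' measurable_add_dim] by simp
qed

text \<open>If row \<open>i\<^sub>0\<close> of \<open>Q\<close> is \<open>\<plusminus>e\<^bsub>i\<^sub>0\<^esub>\<close>, then \<open>Q\<close> flips the sign of \<open>x\<^bsub>i\<^sub>0\<^esub>\<close>
  or not, and acts on the other coordinates by an orthogonal matrix.\<close>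
lemma distr_mat_apply_insert_unit_row:
  assumes J: "finite J" "i0 \<notin> J" and Q: "orthonormal_rows (insert i0 J) Q"
    and row: "\<And>l. l \<in> J \<Longrightarrow> Q i0 l = 0"
    and IH: "distr (gaussian_PiM J) (gaussian_PiM J) (mat_apply J Q) = gaussian_PiM J"
  shows "distr (gaussian_PiM (insert i0 J)) (gaussian_PiM (insert i0 J)) (mat_apply (insert i0 J) Q)
       = gaussian_PiM (insert i0 J)"
proof (rule distr_invariant_via_factor)
  define a where "a = Q i0 i0"
  let ?B = "gaussian \<sigma> \<Otimes>\<^sub>M gaussian_PiM J" and ?g = "\<lambda>(x, X). (a * x, mat_apply J Q X)"
  show "(\<lambda>(x, X). X(i0 := x)) \<in> measurable ?B (gaussian_PiM (insert i0 J))"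
    by (rule measurable_fun_upd_gaussian_PiM)
  show "distr ?B (gaussian_PiM (insert i0 J)) (\<lambda>(x, X). X(i0 := x)) = gaussian_PiM (insert i0 J)"
    by (rule distr_pair_PiM_eq_PiM) (simp_all add: prob_space_gaussian)
  show "mat_apply (insert i0 J) Q
      \<in> measurable (gaussian_PiM (insert i0 J)) (gaussian_PiM (insert i0 J))"
    by (rule measurable_mat_apply)
  have sc: "(\<lambda>x. a * x) \<in> measurable (gaussian \<sigma>) (gaussian \<sigma>)" by (simp add: measurable_gaussian)
  show "?g \<in> measurable ?B ?B" using sc measurable_mat_apply by measurable
  have "distr (gaussian \<sigma>) (gaussian \<sigma>) (\<lambda>x. a * x)
        \<Otimes>\<^sub>M distr (gaussian_PiM J) (gaussian_PiM J) (mat_apply J Q)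
      = distr ?B ?B (\<lambda>(x, y). (a * x, mat_apply J Q y))"
    by (rule pair_measure_distr[OF sc measurable_mat_apply])
      (simp add: IH sigma_finite_gaussian_PiM)
  then show "distr ?B ?B ?g = ?B"
    using IH distr_sign_gaussian orthonormal_rows_insert_unit_row(1)[of J i0 Q, OF J Q row]
      unfolding a_def by simp
  show "mat_apply (insert i0 J) Q ((\<lambda>(x, X). X(i0 := x)) z) = (\<lambda>(x, X). X(i0 := x)) (?g z)" for z
    using mat_apply_insert_unit_row[of J i0 Q, OF J row
        orthonormal_rows_insert_unit_row(2)[of J i0 Q, OF J Q row]]
    unfolding a_def by (simp add: case_prod_beta)
qed

text \<open>Induction on the index set; for the new index \<open>i\<^sub>0\<close>, an inner induction on the number of
  nonzero off-diagonal entries in row \<open>i\<^sub>0\<close>, each of which a Givens rotation from the right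
  eliminates.\<close>
lemma distr_mat_apply_gaussian_PiM:
  assumes "finite I" "orthonormal_rows I Q"
  shows "distr (gaussian_PiM I) (gaussian_PiM I) (mat_apply I Q) = gaussian_PiM I"
  using assms
proof (induction I arbitrary: Q rule: finite_induct)
  case empty
  have "distr (gaussian_PiM {}) (gaussian_PiM {}) (mat_apply {} Q)
      = distr (gaussian_PiM {}) (gaussian_PiM {}) (\<lambda>x. x)"
    by (rule distr_cong) (auto simp: mat_apply_def space_PiM)
  then show ?case by simp
next
  case (insert i0 J)
  define I where "I = insert i0 J"
  have "finite I" using insert(1) unfolding I_def by simp
  have main: "distr (gaussian_PiM I) (gaussian_PiM I) (mat_apply I Q) = gaussian_PiM I"
    if "orthonormal_rows I Q" "card {l\<in>J. Q i0 l \<noteq> 0} = m" for Q m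
    using that
  proof (induction m arbitrary: Q rule: less_induct)
    case (less m)
    show ?case
    proof (cases "{l\<in>J. Q i0 l \<noteq> 0} = {}")
      case True
      then have row: "\<And>l. l \<in> J \<Longrightarrow> Q i0 l = 0" by auto
      have Q: "orthonormal_rows (insert i0 J) Q" using less.prems(1) unfolding I_def .
      then have "orthonormal_rows J Q"
        by (rule orthonormal_rows_insert_unit_row(3)[of J i0 Q, OF insert(1,2) _ row])
      then have "distr (gaussian_PiM J) (gaussian_PiM J) (mat_apply J Q) = gaussian_PiM J"
        by (rule insert.IH)
      then show ?thesis
        using distr_mat_apply_insert_unit_row[of J i0 Q, OF insert(1,2) Q row] by (simp add: I_def)
    next
      case False
      then obtain j where j: "j \<in> J" "Q i0 j \<noteq> 0" by auto
      have ij: "i0 \<in> I" "j \<in> I" "i0 \<noteq> j" using j insert(2) unfolding I_def by auto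
      obtain c s where cs: "c\<^sup>2 + s\<^sup>2 = 1" "1 + c > 0" and zero: "- s * Q i0 i0 + c * Q i0 j = 0"
        using givens_annihilating_entry[OF j(2)] .
      define Q' where "Q' = rotate_columns Q i0 j c s"
      have "Q' i0 l = (if l = j then 0 else Q i0 l)" if "l \<in> J" for l
        using that zero ij(3) insert(2) unfolding Q'_def rotate_columns_def by auto
      then have "{l\<in>J. Q' i0 l \<noteq> 0} = {l\<in>J. Q i0 l \<noteq> 0} - {j}" by (auto split: if_splits)
      moreover have "card ({l\<in>J. Q i0 l \<noteq> 0} - {j}) < card {l\<in>J. Q i0 l \<noteq> 0}"
        using j insert(1) by (intro card_Diff1_less) auto
      ultimately have "card {l\<in>J. Q' i0 l \<noteq> 0} < m" using less.prems(2) by simp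
      moreover have "orthonormal_rows I Q'"
        unfolding Q'_def
        using \<open>finite I\<close> ij cs(1) less.prems(1) by (rule orthonormal_rows_rotate_columns)
      ultimately have Q': "distr (gaussian_PiM I) (gaussian_PiM I) (mat_apply I Q')
          = gaussian_PiM I"
        using less.IH by blast
      have "distr (gaussian_PiM I) (gaussian_PiM I) (mat_apply I Q)
          = distr (distr (gaussian_PiM I) (gaussian_PiM I) (givens i0 j c s)) (gaussian_PiM I)
              (mat_apply I Q)"
        by (simp only: distr_givens_gaussian_PiM[OF \<open>finite I\<close> ij cs])
      also have "\<dots> = distr (gaussian_PiM I) (gaussian_PiM I) (mat_apply I Q')"
        unfolding Q'_def mat_apply_rotate_columns[OF \<open>finite I\<close> ij]
        by (rule distr_distr[OF measurable_mat_apply measurable_givens[OF ij(1,2)]])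
      finally show ?thesis using Q' by simp
    qed
  qed
  show ?case using main[OF insert.prems[folded I_def] refl] unfolding I_def .
qed

lemma distr_sampled_gaussian_PiM:
  fixes \<eta> :: "'i \<Rightarrow> 'a \<Rightarrow> real"
  assumes M: "prob_space M" and S: "S \<noteq> {}" and indep: "prob_space.indep_vars M (\<lambda>_. borel) \<eta> S"
    and \<eta>: "\<And>t. t \<in> S \<Longrightarrow> distr M borel (\<eta> t) = gaussian \<sigma>"
    and p: "inj_on p I" "p \<in> I \<rightarrow> S"
  shows "(\<lambda>\<omega>. \<lambda>l\<in>I. \<eta> (p l) \<omega>) \<in> measurable M (gaussian_PiM I)"
    and "distr M (gaussian_PiM I) (\<lambda>\<omega>. \<lambda>l\<in>I. \<eta> (p l) \<omega>) = gaussian_PiM I"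
proof -
  interpret prob_space M by (rule M)
  define R where "R x = (\<lambda>l\<in>I. x (p l))" for x :: "'i \<Rightarrow> real"
  have sets_eq: "sets (PiM J (\<lambda>_. gaussian \<sigma>)) = sets (PiM J (\<lambda>_. borel))" for J :: "'j set"
    by (rule sets_PiM_cong) simp_all
  have rv: "random_variable borel (\<eta> t)" if "t \<in> S" for t
    using indep that unfolding indep_vars_def by auto
  have meas: "(\<lambda>\<omega>. \<lambda>t\<in>S. \<eta> t \<omega>) \<in> measurable M (gaussian_PiM S)"
    unfolding measurable_cong_sets[OF refl sets_eq] by (rule measurable_restrict) (rule rv)
  have "distr M (PiM S (\<lambda>_. borel)) (\<lambda>\<omega>. \<lambda>t\<in>S. \<eta> t \<omega>) = PiM S (\<lambda>t. distr M borel (\<eta> t))"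
    using indep_vars_iff_distr_eq_PiM'[OF S rv] indep by simp
  also have "\<dots> = gaussian_PiM S" by (rule PiM_cong) (simp_all add: \<eta>)
  moreover have "distr M (gaussian_PiM S) (\<lambda>\<omega>. \<lambda>t\<in>S. \<eta> t \<omega>)
      = distr M (PiM S (\<lambda>_. borel)) (\<lambda>\<omega>. \<lambda>t\<in>S. \<eta> t \<omega>)"
    by (rule distr_cong) (simp_all add: sets_eq)
  ultimately have distr_S: "distr M (gaussian_PiM S) (\<lambda>\<omega>. \<lambda>t\<in>S. \<eta> t \<omega>) = gaussian_PiM S"
    by simp
  have mR: "R \<in> measurable (gaussian_PiM S) (gaussian_PiM I)" unfolding R_def
    using p(2) by (intro measurable_restrict measurable_component_singleton) auto
  have eq: "(\<lambda>\<omega>. \<lambda>l\<in>I. \<eta> (p l) \<omega>) = R \<circ> (\<lambda>\<omega>. \<lambda>t\<in>S. \<eta> t \<omega>)"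
    using p(2) unfolding R_def by (auto simp: fun_eq_iff)
  show "(\<lambda>\<omega>. \<lambda>l\<in>I. \<eta> (p l) \<omega>) \<in> measurable M (gaussian_PiM I)"
    unfolding eq using meas mR by (rule measurable_comp)
  have "distr (gaussian_PiM S) (gaussian_PiM I) R = gaussian_PiM I"
    unfolding R_def using distr_PiM_reindex[of S "\<lambda>_. gaussian \<sigma>" p I] prob_space_gaussian p by simp
  then show "distr M (gaussian_PiM I) (\<lambda>\<omega>. \<lambda>l\<in>I. \<eta> (p l) \<omega>) = gaussian_PiM I"
    unfolding eq distr_distr[OF mR meas, symmetric] distr_S .
qed

lemma indep_components_gaussian_PiM:
  fixes \<zeta> :: "'i \<Rightarrow> 'a \<Rightarrow> real"
  assumes M: "prob_space M" and I: "I \<noteq> {}"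
    and meas: "(\<lambda>\<omega>. \<lambda>k\<in>I. \<zeta> k \<omega>) \<in> measurable M (gaussian_PiM I)"
    and distr: "distr M (gaussian_PiM I) (\<lambda>\<omega>. \<lambda>k\<in>I. \<zeta> k \<omega>) = gaussian_PiM I"
  shows "prob_space.indep_vars M (\<lambda>_. borel) \<zeta> I"
    and "\<And>k. k \<in> I \<Longrightarrow> distr M borel (\<zeta> k) = gaussian \<sigma>"
proof -
  interpret prob_space M by (rule M)
  have rv: "random_variable borel (\<zeta> k)" if "k \<in> I" for k
  proof -
    have "(\<lambda>x. x k) \<circ> (\<lambda>\<omega>. \<lambda>k\<in>I. \<zeta> k \<omega>) \<in> measurable M (gaussian \<sigma>)"
      by (rule measurable_comp[OF meas measurable_component_singleton[OF that]])
    moreover have "(\<lambda>x. x k) \<circ> (\<lambda>\<omega>. \<lambda>k\<in>I. \<zeta> k \<omega>) = \<zeta> k" using that by (auto simp: fun_eq_iff)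
    ultimately show ?thesis by (simp add: measurable_gaussian)
  qed
  show dk: "distr M borel (\<zeta> k) = gaussian \<sigma>" if k: "k \<in> I" for k
  proof -
    have "distr M borel (\<zeta> k) = distr M (gaussian \<sigma>) ((\<lambda>x. x k) \<circ> (\<lambda>\<omega>. \<lambda>k\<in>I. \<zeta> k \<omega>))"
      by (rule distr_cong) (auto simp: k)
    also have "\<dots> = distr (distr M (gaussian_PiM I) (\<lambda>\<omega>. \<lambda>k\<in>I. \<zeta> k \<omega>)) (gaussian \<sigma>) (\<lambda>x. x k)"
      using meas k by (simp add: distr_distr)
    also have "\<dots> = gaussian \<sigma>"
      unfolding distr
      using distr_PiM_component[of I "\<lambda>_. gaussian \<sigma>" k] prob_space_gaussian k by simp
    finally show ?thesis .
  qed
  have "sets (gaussian_PiM I) = sets (PiM I (\<lambda>_. borel))" by (rule sets_PiM_cong) simp_all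
  then have "distr M (PiM I (\<lambda>_. borel)) (\<lambda>\<omega>. \<lambda>k\<in>I. \<zeta> k \<omega>)
      = distr M (gaussian_PiM I) (\<lambda>\<omega>. \<lambda>k\<in>I. \<zeta> k \<omega>)"
    by (intro distr_cong) simp_all
  also have "\<dots> = PiM I (\<lambda>k. distr M borel (\<zeta> k))"
    unfolding distr by (rule PiM_cong) (simp_all add: dk)
  finally show "indep_vars (\<lambda>_. borel) \<zeta> I" using indep_vars_iff_distr_eq_PiM'[OF I rv] by simp
qed

lemma Tphi_gaussian_noise:
  fixes M :: "'a measure" and \<eta> :: "real \<Rightarrow> 'a \<Rightarrow> real"
  assumes M: "prob_space M" and T: "T > 0" and n: "n > 0"
    and indep: "prob_space.indep_vars M (\<lambda>_. borel) \<eta> {0..T}"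
    and \<eta>: "\<And>t. t \<in> {0..T} \<Longrightarrow> distr M borel (\<eta> t) = gaussian \<sigma>"
    and A1: "\<And>l k. 1 \<le> l \<and> l \<le> n \<and> 1 \<le> k \<and> k \<le> n \<Longrightarrow>
               (1 / real n) * (\<Sum>j=1..n. \<phi> l (T * real j / real n) * \<phi> k (T * real j / real n))
               = (if l = k then 1 else 0)"
  shows "prob_space.indep_vars M (\<lambda>_. borel) (\<lambda>k \<omega>. Tphi T \<phi> n k (\<lambda>t. \<eta> t \<omega>)) {1..n}"
    and "\<And>k. k \<in> {1..n} \<Longrightarrow> distr M borel (\<lambda>\<omega>. Tphi T \<phi> n k (\<lambda>t. \<eta> t \<omega>))
        = gaussian (\<sigma> / sqrt (real n))"
proof -
  interpret prob_space M by (rule M)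
  define I where "I = {1..n}"
  define p where "p l = T * real l / real n" for l
  define Q where "Q k l = \<phi> k (p l) / sqrt (real n)" for k l
  define \<zeta> where "\<zeta> k \<omega> = (\<Sum>l\<in>I. Q k l * \<eta> (p l) \<omega>)" for k \<omega>
  have I: "finite I" "I \<noteq> {}" using n unfolding I_def by auto
  have p: "inj_on p I" "p \<in> I \<rightarrow> {0..T}"
    using inj_on_sample_points[OF T n] sample_point_in_interval[OF less_imp_le[OF T]]
      unfolding p_def I_def by auto
  have sample: "(\<lambda>\<omega>. \<lambda>l\<in>I. \<eta> (p l) \<omega>) \<in> measurable M (gaussian_PiM I)"
    "distr M (gaussian_PiM I) (\<lambda>\<omega>. \<lambda>l\<in>I. \<eta> (p l) \<omega>) = gaussian_PiM I"
    using distr_sampled_gaussian_PiM[OF M _ indep \<eta> p] T by auto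
  have Q: "orthonormal_rows I Q"
    unfolding Q_def p_def I_def using orthonormal_rows_sampled_basis[OF n A1] by simp
  have \<zeta>_eq: "(\<lambda>\<omega>. \<lambda>k\<in>I. \<zeta> k \<omega>) = mat_apply I Q \<circ> (\<lambda>\<omega>. \<lambda>l\<in>I. \<eta> (p l) \<omega>)"
    unfolding \<zeta>_def mat_apply_def by (auto simp: fun_eq_iff)
  have \<zeta>_meas: "(\<lambda>\<omega>. \<lambda>k\<in>I. \<zeta> k \<omega>) \<in> measurable M (gaussian_PiM I)"
    unfolding \<zeta>_eq by (rule measurable_comp[OF sample(1) measurable_mat_apply])
  have "distr M (gaussian_PiM I) (\<lambda>\<omega>. \<lambda>k\<in>I. \<zeta> k \<omega>) = gaussian_PiM I"
    unfolding \<zeta>_eq distr_distr[OF measurable_mat_apply sample(1), symmetric] sample(2)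
    by (rule distr_mat_apply_gaussian_PiM[OF I(1) Q])
  note \<zeta> = indep_components_gaussian_PiM[OF M I(2) \<zeta>_meas this]
  have Tphi_eq: "Tphi T \<phi> n k (\<lambda>t. \<eta> t \<omega>) = (1 / sqrt (real n)) * \<zeta> k \<omega>" for k \<omega>
  proof -
    have sq: "sqrt (real n) * sqrt (real n) = real n" using n by simp
    show ?thesis unfolding Tphi_real \<zeta>_def Q_def p_def I_def
      by (simp add: sum_distrib_left sq)
  qed
  have "indep_vars (\<lambda>_. borel) (\<lambda>k \<omega>. (\<lambda>x. (1 / sqrt (real n)) * x) (\<zeta> k \<omega>)) I"
    by (rule indep_vars_compose2[OF \<zeta>(1)]) simp
  then show "indep_vars (\<lambda>_. borel) (\<lambda>k \<omega>. Tphi T \<phi> n k (\<lambda>t. \<eta> t \<omega>)) {1..n}"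
    unfolding Tphi_eq I_def .
  show "distr M borel (\<lambda>\<omega>. Tphi T \<phi> n k (\<lambda>t. \<eta> t \<omega>)) = gaussian (\<sigma> / sqrt (real n))"
    if "k \<in> {1..n}" for k
  proof -
    have "random_variable borel (\<zeta> k)" using \<zeta>(1) that unfolding indep_vars_def I_def by auto
    then show ?thesis unfolding Tphi_eq
      using distr_mult_gaussian[OF M \<sigma>, of "1 / sqrt (real n)" "\<zeta> k"] \<zeta>(2) n that
      unfolding I_def by simp
  qed
qed

end

section \<open>The noise coefficients\<close>

lemma indep_vars_AE_zero:
  fixes X :: "'i \<Rightarrow> 'a \<Rightarrow> real"
  assumes M: "prob_space M" and I: "finite I" "I \<noteq> {}"
    and X: "\<And>k. k \<in> I \<Longrightarrow> X k \<in> borel_measurable M" and zero: "AE \<omega> in M. \<forall>k\<in>I. X k \<omega> = 0"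
  shows "prob_space.indep_vars M (\<lambda>_. borel) X I" "\<And>k. k \<in> I \<Longrightarrow> distr M borel (X k) = return borel 0"
proof -
  interpret prob_space M by (rule M)
  show d: "distr M borel (X k) = return borel 0" if k: "k \<in> I" for k
  proof -
    have "distr M borel (X k) = distr M borel (\<lambda>_. 0)"
      by (rule distr_cong_AE) (use zero k X in auto)
    then show ?thesis by simp
  qed
  have "distr M (PiM I (\<lambda>_. borel)) (\<lambda>\<omega>. \<lambda>k\<in>I. X k \<omega>)
      = distr M (PiM I (\<lambda>_. borel)) (\<lambda>\<omega>. \<lambda>k\<in>I. (0::real))"
  proof (rule distr_cong_AE)
    show "AE \<omega> in M. (\<lambda>k\<in>I. X k \<omega>) = (\<lambda>k\<in>I. 0)"
      using zero by eventually_elim (auto simp: fun_eq_iff)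
  qed (use X in \<open>auto intro!: measurable_restrict\<close>)
  also have "\<dots> = return (PiM I (\<lambda>_. borel)) (\<lambda>k\<in>I. 0)" by (subst distr_const) (auto simp: space_PiM)
  also have "\<dots> = PiM I (\<lambda>k. return borel 0)" by (rule PiM_return[symmetric]) (simp_all add: I)
  also have "\<dots> = PiM I (\<lambda>k. distr M borel (X k))" by (rule PiM_cong) (simp_all add: d)
  finally show "indep_vars (\<lambda>_. borel) X I" using indep_vars_iff_distr_eq_PiM'[OF I(2) X] by simp
qed

lemma Tphi_degenerate_noise:
  fixes M :: "'a measure" and \<eta> :: "real \<Rightarrow> 'a \<Rightarrow> real"
  assumes M: "prob_space M" and T: "T > 0" and n: "n > 0"
    and \<eta>: "\<And>t. t \<in> {0..T} \<Longrightarrow> centred_gaussian M 0 (\<eta> t)"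
  shows "prob_space.indep_vars M (\<lambda>_. borel) (\<lambda>k \<omega>. Tphi T \<phi> n k (\<lambda>t. \<eta> t \<omega>)) {1..n}"
    "\<And>k. k \<in> {1..n} \<Longrightarrow> centred_gaussian M 0 (\<lambda>\<omega>. Tphi T \<phi> n k (\<lambda>t. \<eta> t \<omega>))"
proof -
  interpret prob_space M by (rule M)
  have meas: "\<eta> t \<in> borel_measurable M" if "t \<in> {0..T}" for t
    using \<eta>[OF that] unfolding centred_gaussian_def by simp
  have "AE \<omega> in M. \<eta> t \<omega> = 0" if t: "t \<in> {0..T}" for t
  proof -
    have d: "distr M borel (\<eta> t) = return borel 0"
      using \<eta>[OF t] unfolding centred_gaussian_def by simp
    have "AE x in distr M borel (\<eta> t). x = 0" unfolding d by (subst AE_return) simp_all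
    then show ?thesis by (rule AE_distrD[OF meas[OF t]])
  qed
  then have "AE \<omega> in M. \<forall>l\<in>{1..n}. \<eta> (T * real l / real n) \<omega> = 0"
    using sample_point_in_interval[OF less_imp_le[OF T]] by (intro AE_finite_allI) auto
  then have zero: "AE \<omega> in M. \<forall>k\<in>{1..n}. Tphi T \<phi> n k (\<lambda>t. \<eta> t \<omega>) = 0"
    by eventually_elim (simp add: Tphi_real)
  have meas_Tphi: "\<And>k. (\<lambda>\<omega>. Tphi T \<phi> n k (\<lambda>t. \<eta> t \<omega>)) \<in> borel_measurable M"
    using meas T by (intro borel_measurable_Tphi) auto
  have I: "finite {1..n}" "{1..n} \<noteq> {}" using n by auto
  show "indep_vars (\<lambda>_. borel) (\<lambda>k \<omega>. Tphi T \<phi> n k (\<lambda>t. \<eta> t \<omega>)) {1..n}"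
    by (rule indep_vars_AE_zero(1)[OF M I meas_Tphi zero])
  show "centred_gaussian M 0 (\<lambda>\<omega>. Tphi T \<phi> n k (\<lambda>t. \<eta> t \<omega>))" if "k \<in> {1..n}" for k
    using indep_vars_AE_zero(2)[OF M I meas_Tphi zero that] meas_Tphi
      unfolding centred_gaussian_def by simp
qed

lemma Tphi_noise_iid_centred_gaussian:
  fixes M :: "'a measure" and \<eta> :: "real \<Rightarrow> 'a \<Rightarrow> real"
  assumes M: "prob_space M" and T: "T > 0" and \<sigma>: "\<sigma> \<ge> 0"
    and indep: "prob_space.indep_vars M (\<lambda>_. borel) \<eta> {0..T}"
    and \<eta>: "\<forall>t\<in>{0..T}. centred_gaussian M (\<sigma>\<^sup>2) (\<eta> t)"
    and A1: "\<forall>n l k. 1 \<le> l \<and> l \<le> n \<and> 1 \<le> k \<and> k \<le> n \<longrightarrow>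
               (1 / real n) * (\<Sum>j=1..n. \<phi> l (T * real j / real n) * \<phi> k (T * real j / real n))
               = (if l = k then 1 else 0)"
  shows "prob_space.indep_vars M (\<lambda>_. borel) (\<lambda>k \<omega>. Tphi T \<phi> n k (\<lambda>t. \<eta> t \<omega>)) {1..n}
       \<and> (\<forall>k\<in>{1..n}. centred_gaussian M (\<sigma>\<^sup>2 / real n) (\<lambda>\<omega>. Tphi T \<phi> n k (\<lambda>t. \<eta> t \<omega>)))"
proof (cases "n = 0")
  case True
  then show ?thesis by (simp add: prob_space.indep_vars_def[OF M] prob_space.indep_sets_def[OF M])
next
  case False
  then have n: "n > 0" by simp
  show ?thesis
  proof (cases "\<sigma> = 0")
    case True
    then have "\<And>t. t \<in> {0..T} \<Longrightarrow> centred_gaussian M 0 (\<eta> t)" using \<eta> by simp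
    note Z = Tphi_degenerate_noise[OF M T n this, where \<phi> = \<phi>]
    show ?thesis using Z \<open>\<sigma> = 0\<close> by simp
  next
    case False
    then have "\<sigma> > 0" using \<sigma> by simp
    have "distr M borel (\<eta> t) = gaussian \<sigma>" if "t \<in> {0..T}" for t
      using \<eta> that \<open>\<sigma> > 0\<close> unfolding centred_gaussian_def by simp
    note Z = Tphi_gaussian_noise[OF \<open>\<sigma> > 0\<close> M T n indep this A1[rule_format]]
    have "sqrt (\<sigma>\<^sup>2 / real n) = \<sigma> / sqrt (real n)" using \<open>\<sigma> > 0\<close> by (simp add: real_sqrt_divide)
    moreover have "(\<lambda>\<omega>. Tphi T \<phi> n k (\<lambda>t. \<eta> t \<omega>)) \<in> borel_measurable M" for k
      using indep T unfolding prob_space.indep_vars_def[OF M] by (intro borel_measurable_Tphi) auto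
    ultimately show ?thesis using Z n \<open>\<sigma> > 0\<close> unfolding centred_gaussian_def by auto
  qed
qed

theorem lemmaD4:
  fixes M :: "'a measure"
    and T :: real
    and \<phi> :: "nat \<Rightarrow> real \<Rightarrow> real"
    and G :: "nat set"
    and U :: "real \<Rightarrow> 'a \<Rightarrow> real"
    and X :: "real \<Rightarrow> 'a \<Rightarrow> real^'d"
    and \<eta> :: "real \<Rightarrow> 'a \<Rightarrow> real"
    and \<sigma>\<eta> :: real
    and \<beta> :: "real^'d"
    and Y :: "real \<Rightarrow> 'a \<Rightarrow> real"
    and c :: "nat \<Rightarrow> nat"
  assumes M: "prob_space M"
    and T: "T > 0"
    and ONB: "ONB_L2 T \<phi>"
    and cont: "one_sided_continuous T \<phi>"
    and G: "G \<subseteq> {1..}"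
    and U_meas: "(\<lambda>(t, \<omega>). U t \<omega>) \<in> borel_measurable (restrict_space lborel {0..T} \<Otimes>\<^sub>M M)"
    and U_L2: "(\<integral>\<^sup>+ \<omega>. (\<integral>\<^sup>+ t. indicator {0..T} t * ennreal ((U t \<omega>)\<^sup>2) \<partial>lborel) \<partial>M) < \<infinity>"
    and U_G: "\<forall>k\<ge>1. k \<notin> G \<longrightarrow> (AE \<omega> in M. L2inner T (\<lambda>t. U t \<omega>) (\<phi> k) = 0)"
    and U_exp: "AE \<omega> in M. \<forall>t\<in>{0..T}.
                  (\<lambda>k. if k \<in> G then L2inner T (\<phi> k) (\<lambda>s. U s \<omega>) * \<phi> k t else 0) sums U t \<omega>"
    and X_meas: "\<forall>t\<in>{0..T}. X t \<in> borel_measurable M"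
    and \<sigma>: "\<sigma>\<eta> \<ge> 0"
    and \<eta>_indep: "prob_space.indep_vars M (\<lambda>_. borel) \<eta> {0..T}"
    and \<eta>_gauss: "\<forall>t\<in>{0..T}. centred_gaussian M (\<sigma>\<eta>\<^sup>2) (\<eta> t)"
    and \<eta>_X_indep: "prob_space.indep_set M
       (sets (vimage_algebra (space M) (\<lambda>\<omega>. restrict (\<lambda>t. \<eta> t \<omega>) {0..T}) (PiM {0..T} (\<lambda>_. borel))))
       (sets (vimage_algebra (space M) (\<lambda>\<omega>. restrict (\<lambda>t. X t \<omega>) {0..T}) (PiM {0..T} (\<lambda>_. borel))))"
    and Y: "\<forall>t\<in>{0..T}. \<forall>\<omega>\<in>space M. Y t \<omega> = X t \<omega> \<bullet> \<beta> + U t \<omega> + \<eta> t \<omega>"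
    and c: "\<forall>n. card (G \<inter> {1..n}) \<le> c n"
    and A1: "\<forall>n l k. 1 \<le> l \<and> l \<le> n \<and> 1 \<le> k \<and> k \<le> n \<longrightarrow>
               (1 / real n) * (\<Sum>j=1..n. \<phi> l (T * real j / real n) * \<phi> k (T * real j / real n))
               = (if l = k then 1 else 0)"
    and A2: "\<forall>\<delta>>0. \<exists>c'>0. \<exists>nbar. \<forall>n\<ge>nbar. \<exists>S'. S' \<subseteq> {1..n} \<and> card S' = 2 * c n + CARD('d) \<and>
               measure M {\<omega> \<in> space M. \<forall>S''. S'' \<subseteq> S' \<and> card S'' = CARD('d) \<longrightarrow>
                  lambda_min (gram T \<phi> n (\<lambda>t. X t \<omega>) S'') \<ge> c'} \<ge> 1 - \<delta>"
  shows "(\<forall>n. real (card (Ucal c n)) \<le> (exp 1 * real n / real (c n)) ^ c n)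
       \<and> (\<forall>n. prob_space.indep_vars M (\<lambda>_. borel) (\<lambda>k \<omega>. Tphi T \<phi> n k (\<lambda>t. \<eta> t \<omega>)) {1..n}
              \<and> (\<forall>k\<in>{1..n}. centred_gaussian M (\<sigma>\<eta>\<^sup>2 / real n) (\<lambda>\<omega>. Tphi T \<phi> n k (\<lambda>t. \<eta> t \<omega>))))
       \<and> (\<forall>\<delta>>0. \<exists>c'>0. \<exists>nbar. \<forall>n\<ge>nbar.
              measure M {\<omega> \<in> space M. \<forall>S\<in>Ucal c n.
                 sqrt (lambda_min (gram T \<phi> n (\<lambda>t. X t \<omega>) (S - G \<inter> {1..n}))) \<ge> c'} \<ge> 1 - \<delta>)"
proof -
  have "prob_space.indep_vars M (\<lambda>_. borel) (\<lambda>k \<omega>. Tphi T \<phi> n k (\<lambda>t. \<eta> t \<omega>)) {1..n}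
      \<and> (\<forall>k\<in>{1..n}. centred_gaussian M (\<sigma>\<eta>\<^sup>2 / real n) (\<lambda>\<omega>. Tphi T \<phi> n k (\<lambda>t. \<eta> t \<omega>)))" for n
    by (rule Tphi_noise_iid_centred_gaussian[OF M T \<sigma> \<eta>_indep \<eta>_gauss A1])
  then show ?thesis
    using card_Ucal_le prob_lambda_min_gram_Ucal_ge[OF M less_imp_le[OF T] X_meas c A2] by blast
qed

end
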